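(* Let $P<G$ be finite groups and $U,V$ irreducible $\mathbb{F}G$-modules such that: (i) $\dim\mathrm{End}_P(U)\geq2$ and $\dim\mathrm{End}_P(V)\geq2$; (ii) the module $W:=(1_P){\uparrow}^G$ is either a direct sum $1_G\oplus A$ or a uniserial module with composition factors $1_G,A,1_G$, where $A\not\cong1_G$. Then $U\otimes V$ is reducible.
   Context: $\mathbb{F}$ is an algebraically closed field; $1_X$ denotes the trivial module of a group $X$. *)

theory Defs
  imports "HOL-Algebra.Coset" "HOL-Computational_Algebra.Polynomial" "Jordan_Normal_Form.Matrix"
begin

text \<open>An FG-module of dimension n is given by a matrix representation
  rho : G -> GL_n(F), acting on the column space carrier_vec n.\<close>

definition is_rep :: "('g, 'b) monoid_scheme \<Rightarrow> nat \<Rightarrow> ('g \<Rightarrow> 'f::field mat) \<Rightarrow> bool" where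
  "is_rep G n \<rho> \<longleftrightarrow>
     (\<forall>g\<in>carrier G. \<rho> g \<in> carrier_mat n n) \<and>
     \<rho> \<one>\<^bsub>G\<^esub> = 1\<^sub>m n \<and>
     (\<forall>g\<in>carrier G. \<forall>h\<in>carrier G. \<rho> (g \<otimes>\<^bsub>G\<^esub> h) = \<rho> g * \<rho> h)"

definition is_subspace :: "nat \<Rightarrow> 'f::field vec set \<Rightarrow> bool" where
  "is_subspace n S \<longleftrightarrow> S \<subseteq> carrier_vec n \<and> 0\<^sub>v n \<in> S \<and>
     (\<forall>u\<in>S. \<forall>v\<in>S. u + v \<in> S) \<and> (\<forall>a. \<forall>v\<in>S. a \<cdot>\<^sub>v v \<in> S)"

definition is_submodule :: "'g set \<Rightarrow> nat \<Rightarrow> ('g \<Rightarrow> 'f::field mat) \<Rightarrow> 'f vec set \<Rightarrow> bool" where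
  "is_submodule H n \<rho> S \<longleftrightarrow> is_subspace n S \<and> (\<forall>g\<in>H. \<forall>v\<in>S. \<rho> g *\<^sub>v v \<in> S)"

definition irreducible_rep :: "('g, 'b) monoid_scheme \<Rightarrow> nat \<Rightarrow> ('g \<Rightarrow> 'f::field mat) \<Rightarrow> bool" where
  "irreducible_rep G n \<rho> \<longleftrightarrow> is_rep G n \<rho> \<and> n > 0 \<and>
     (\<forall>S. is_submodule (carrier G) n \<rho> S \<longrightarrow> S = {0\<^sub>v n} \<or> S = carrier_vec n)"

definition End_rep :: "'g set \<Rightarrow> nat \<Rightarrow> ('g \<Rightarrow> 'f::field mat) \<Rightarrow> 'f mat set" where
  "End_rep H n \<rho> = {M \<in> carrier_mat n n. \<forall>h\<in>H. M * \<rho> h = \<rho> h * M}"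

text \<open>dim End_H(U) >= 2: End_H(U) contains two linearly independent elements.\<close>
definition dim_End_ge2 :: "'g set \<Rightarrow> nat \<Rightarrow> ('g \<Rightarrow> 'f::field mat) \<Rightarrow> bool" where
  "dim_End_ge2 H n \<rho> \<longleftrightarrow> (\<exists>M1\<in>End_rep H n \<rho>. \<exists>M2\<in>End_rep H n \<rho>.
     \<forall>a b. a \<cdot>\<^sub>m M1 + b \<cdot>\<^sub>m M2 = 0\<^sub>m n n \<longrightarrow> a = 0 \<and> b = 0)"

text \<open>For submodules S \<subseteq> T of (n, rho), the subquotient T/S is isomorphic to (m, sigma):
  there is a linear G-equivariant map from T onto F^m with kernel S.\<close>
definition subquot_iso ::
  "('g, 'b) monoid_scheme \<Rightarrow> nat \<Rightarrow> ('g \<Rightarrow> 'f::field mat) \<Rightarrow> 'f vec set \<Rightarrow> 'f vec set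
     \<Rightarrow> nat \<Rightarrow> ('g \<Rightarrow> 'f mat) \<Rightarrow> bool" where
  "subquot_iso G n \<rho> S T m \<sigma> \<longleftrightarrow>
     (\<exists>F \<in> carrier_mat m n. (\<lambda>v. F *\<^sub>v v) ` T = carrier_vec m \<and>
        {v\<in>T. F *\<^sub>v v = 0\<^sub>v m} = S \<and>
        (\<forall>g\<in>carrier G. \<forall>v\<in>T. F *\<^sub>v (\<rho> g *\<^sub>v v) = \<sigma> g *\<^sub>v (F *\<^sub>v v)))"

definition rep_iso :: "('g, 'b) monoid_scheme \<Rightarrow> nat \<Rightarrow> ('g \<Rightarrow> 'f::field mat) \<Rightarrow> nat \<Rightarrow> ('g \<Rightarrow> 'f mat) \<Rightarrow> bool" where
  "rep_iso G n \<rho> m \<sigma> \<longleftrightarrow> subquot_iso G n \<rho> {0\<^sub>v n} (carrier_vec n) m \<sigma>"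

definition triv_rep :: "'g \<Rightarrow> 'f::field mat" where
  "triv_rep = (\<lambda>g. 1\<^sub>m 1)"

text \<open>Kronecker product of matrices, giving the tensor product of modules.\<close>
definition kron :: "'f::field mat \<Rightarrow> 'f mat \<Rightarrow> 'f mat" where
  "kron A B = mat (dim_row A * dim_row B) (dim_col A * dim_col B)
     (\<lambda>(i, j). A $$ (i div dim_row B, j div dim_col B) * B $$ (i mod dim_row B, j mod dim_col B))"

definition tensor_rep :: "('g \<Rightarrow> 'f::field mat) \<Rightarrow> ('g \<Rightarrow> 'f mat) \<Rightarrow> 'g \<Rightarrow> 'f mat" where
  "tensor_rep \<rho> \<sigma> = (\<lambda>g. kron (\<rho> g) (\<sigma> g))"

text \<open>The induced module (1_P)\<up>^G, realised as the permutation module on the left cosets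
  gP, with respect to some enumeration of the cosets.\<close>
definition lcosets_of :: "('g, 'b) monoid_scheme \<Rightarrow> 'g set \<Rightarrow> 'g set set" where
  "lcosets_of G P = {x <#\<^bsub>G\<^esub> P | x. x \<in> carrier G}"

definition ind_dim :: "('g, 'b) monoid_scheme \<Rightarrow> 'g set \<Rightarrow> nat" where
  "ind_dim G P = card (lcosets_of G P)"

definition coset_enum :: "('g, 'b) monoid_scheme \<Rightarrow> 'g set \<Rightarrow> nat \<Rightarrow> 'g set" where
  "coset_enum G P = (SOME e. bij_betw e {..<ind_dim G P} (lcosets_of G P))"

definition ind_triv_rep :: "('g, 'b) monoid_scheme \<Rightarrow> 'g set \<Rightarrow> 'g \<Rightarrow> 'f::field mat" where
  "ind_triv_rep G P = (\<lambda>g. mat (ind_dim G P) (ind_dim G P)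
     (\<lambda>(i, j). if g <#\<^bsub>G\<^esub> coset_enum G P j = coset_enum G P i then 1 else 0))"

text \<open>W is isomorphic to 1_G \<oplus> A (internal direct sum of submodules).\<close>
definition is_triv_plus :: "('g, 'b) monoid_scheme \<Rightarrow> nat \<Rightarrow> ('g \<Rightarrow> 'f::field mat) \<Rightarrow> nat \<Rightarrow> ('g \<Rightarrow> 'f mat) \<Rightarrow> bool" where
  "is_triv_plus G n \<rho> a \<alpha> \<longleftrightarrow>
     (\<exists>S1 S2. is_submodule (carrier G) n \<rho> S1 \<and> is_submodule (carrier G) n \<rho> S2 \<and>
        S1 \<inter> S2 = {0\<^sub>v n} \<and> {u + v | u v. u \<in> S1 \<and> v \<in> S2} = carrier_vec n \<and>
        subquot_iso G n \<rho> {0\<^sub>v n} S1 1 triv_rep \<and> subquot_iso G n \<rho> {0\<^sub>v n} S2 a \<alpha>)"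

definition uniserial :: "('g, 'b) monoid_scheme \<Rightarrow> nat \<Rightarrow> ('g \<Rightarrow> 'f::field mat) \<Rightarrow> bool" where
  "uniserial G n \<rho> \<longleftrightarrow> (\<forall>S T. is_submodule (carrier G) n \<rho> S \<longrightarrow> is_submodule (carrier G) n \<rho> T
     \<longrightarrow> S \<subseteq> T \<or> T \<subseteq> S)"

text \<open>Uniserial with composition factors 1_G, A, 1_G (socle 1_G, then A, head 1_G).\<close>
definition uniserial_1A1 :: "('g, 'b) monoid_scheme \<Rightarrow> nat \<Rightarrow> ('g \<Rightarrow> 'f::field mat) \<Rightarrow> nat \<Rightarrow> ('g \<Rightarrow> 'f mat) \<Rightarrow> bool" where
  "uniserial_1A1 G n \<rho> a \<alpha> \<longleftrightarrow> uniserial G n \<rho> \<and>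
     (\<exists>W1 W2. is_submodule (carrier G) n \<rho> W1 \<and> is_submodule (carrier G) n \<rho> W2 \<and> W1 \<subseteq> W2 \<and>
        subquot_iso G n \<rho> {0\<^sub>v n} W1 1 triv_rep \<and>
        subquot_iso G n \<rho> W1 W2 a \<alpha> \<and>
        subquot_iso G n \<rho> W2 (carrier_vec n) 1 triv_rep)"

end

theory Submission
  imports Defs "Jordan_Normal_Form.Char_Poly"
begin

text \<open>
  Suppose U \<otimes> V were irreducible. Choose non-scalar M \<in> End_P(U), N \<in> End_P(V) and coset
  representatives g_k of G/P. The conjugates M_k = g_k M g_k^-1 depend only on the coset, and G
  permutes them as it permutes the cosets. Hence \<Sum>_k M_k \<otimes> N_k commutes with G and is scalar by
  Schur's lemma, and f \<mapsto> \<Sum>_k f_k M_k is a G-map from W = (1_P)\<up>^G to End(U), so the coefficient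
  vectors f giving scalars form a submodule K of W. K contains the constant vectors but not the
  first unit vector (M is not scalar), and comparing entries of the scalar \<Sum>_k M_k \<otimes> N_k shows that
  K contains a non-constant vector (N is not scalar). If W = 1_G \<oplus> A, then K \<inter> A is 0 or A, and
  both are impossible. If W is uniserial with socle W_1 and radical W_2, then W_2 \<subseteq> K, and the
  f \<in> W_2 with \<Sum>_k f_k M_k = 0 form a submodule Z: Z = W_2 forces all M_k to coincide, so M would
  be scalar; Z = W_1 forces A \<cong> 1_G; and Z \<subset> W_1 would give W_2 = W_1 + Z = W_1.
\<close>

section \<open>Linear combinations and Kronecker products of matrices\<close>

definition mat_lincomb :: "nat \<Rightarrow> nat \<Rightarrow> 'i set \<Rightarrow> ('i \<Rightarrow> 'f::field) \<Rightarrow> ('i \<Rightarrow> 'f mat) \<Rightarrow> 'f mat" where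
  "mat_lincomb nr nc J c Y = mat nr nc (\<lambda>(a, b). \<Sum>j\<in>J. c j * Y j $$ (a, b))"

lemma mat_lincomb_carrier [simp]: "mat_lincomb nr nc J c Y \<in> carrier_mat nr nc"
  and dim_mat_lincomb [simp]: "dim_row (mat_lincomb nr nc J c Y) = nr" "dim_col (mat_lincomb nr nc J c Y) = nc"
  by (simp_all add: mat_lincomb_def)

lemma index_mat_lincomb:
  "a < nr \<Longrightarrow> b < nc \<Longrightarrow> mat_lincomb nr nc J c Y $$ (a, b) = (\<Sum>j\<in>J. c j * Y j $$ (a, b))"
  by (simp add: mat_lincomb_def)

lemma mat_lincomb_cong:
  assumes "\<And>j. j \<in> J \<Longrightarrow> c j = d j" and "\<And>j. j \<in> J \<Longrightarrow> Y j = Z j"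
  shows "mat_lincomb nr nc J c Y = mat_lincomb nr nc J d Z"
  unfolding mat_lincomb_def using assms by (intro arg_cong[where f = "mat nr nc"] ext) (auto intro!: sum.cong)

lemma mat_lincomb_reindex:
  assumes "bij_betw \<sigma> J J"
  shows "mat_lincomb nr nc J (\<lambda>j. c (\<sigma> j)) (\<lambda>j. Y (\<sigma> j)) = mat_lincomb nr nc J c Y"
  unfolding mat_lincomb_def using sum.reindex_bij_betw[OF assms, of "\<lambda>j. c j * Y j $$ _"] by simp

lemma mat_lincomb_add:
  "mat_lincomb nr nc J (\<lambda>j. c j + d j) Y = mat_lincomb nr nc J c Y + mat_lincomb nr nc J d Y"
  by (rule eq_matI) (simp_all add: index_mat_lincomb distrib_right sum.distrib)

lemma mat_lincomb_diff:
  "mat_lincomb nr nc J (\<lambda>j. c j - d j) Y = mat_lincomb nr nc J c Y - mat_lincomb nr nc J d Y"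
  by (rule eq_matI) (simp_all add: index_mat_lincomb left_diff_distrib sum_subtractf)

lemma mat_lincomb_smult:
  "mat_lincomb nr nc J (\<lambda>j. a * c j) Y = a \<cdot>\<^sub>m mat_lincomb nr nc J c Y"
  by (rule eq_matI) (simp_all add: index_mat_lincomb sum_distrib_left mult.assoc)

lemma mat_lincomb_single:
  fixes Y :: "'i \<Rightarrow> 'f::field mat"
  assumes "finite J" "j \<in> J" "Y j \<in> carrier_mat nr nc"
  shows "mat_lincomb nr nc J (\<lambda>k. if k = j then 1 else 0) Y = Y j"
proof -
  have "(if k = j then 1 else 0) * x = (if k = j then x else 0)" for k and x :: 'f
    by simp
  then show ?thesis
    by (intro eq_matI) (use assms in \<open>simp_all add: index_mat_lincomb\<close>)
qed

lemma mult_mat_lincomb: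
  assumes A: "A \<in> carrier_mat k nr" and Y: "\<And>j. j \<in> J \<Longrightarrow> Y j \<in> carrier_mat nr nc"
  shows "A * mat_lincomb nr nc J c Y = mat_lincomb k nc J c (\<lambda>j. A * Y j)"
proof (rule eq_matI)
  fix a b assume "a < dim_row (mat_lincomb k nc J c (\<lambda>j. A * Y j))"
    and "b < dim_col (mat_lincomb k nc J c (\<lambda>j. A * Y j))"
  hence a: "a < k" and b: "b < nc" by auto
  have "(A * mat_lincomb nr nc J c Y) $$ (a, b) = (\<Sum>i<nr. A $$ (a, i) * (\<Sum>j\<in>J. c j * Y j $$ (i, b)))"
    using A a b by (simp add: scalar_prod_def index_mat_lincomb lessThan_atLeast0)
  also have "\<dots> = (\<Sum>j\<in>J. c j * (\<Sum>i<nr. A $$ (a, i) * Y j $$ (i, b)))"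
    by (simp add: sum_distrib_left sum.swap[of _ J] mult.left_commute)
  also have "\<dots> = (\<Sum>j\<in>J. c j * (A * Y j) $$ (a, b))"
  proof -
    have "(\<Sum>i<nr. A $$ (a, i) * Y j $$ (i, b)) = (A * Y j) $$ (a, b)" if "j \<in> J" for j
      using A Y[OF that] a b by (simp add: scalar_prod_def lessThan_atLeast0)
    then show ?thesis by simp
  qed
  finally show "(A * mat_lincomb nr nc J c Y) $$ (a, b) = mat_lincomb k nc J c (\<lambda>j. A * Y j) $$ (a, b)"
    using a b by (simp add: index_mat_lincomb)
qed (use A in auto)

lemma mat_lincomb_mult:
  assumes B: "B \<in> carrier_mat nc k" and Y: "\<And>j. j \<in> J \<Longrightarrow> Y j \<in> carrier_mat nr nc"
  shows "mat_lincomb nr nc J c Y * B = mat_lincomb nr k J c (\<lambda>j. Y j * B)"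
proof (rule eq_matI)
  fix a b assume "a < dim_row (mat_lincomb nr k J c (\<lambda>j. Y j * B))"
    and "b < dim_col (mat_lincomb nr k J c (\<lambda>j. Y j * B))"
  hence a: "a < nr" and b: "b < k" by auto
  have "(mat_lincomb nr nc J c Y * B) $$ (a, b) = (\<Sum>i<nc. (\<Sum>j\<in>J. c j * Y j $$ (a, i)) * B $$ (i, b))"
    using B a b by (simp add: scalar_prod_def index_mat_lincomb lessThan_atLeast0)
  also have "\<dots> = (\<Sum>j\<in>J. c j * (\<Sum>i<nc. Y j $$ (a, i) * B $$ (i, b)))"
    by (simp add: sum_distrib_left sum_distrib_right sum.swap[of _ J] mult.assoc)
  also have "\<dots> = (\<Sum>j\<in>J. c j * (Y j * B) $$ (a, b))"
  proof -
    have "(\<Sum>i<nc. Y j $$ (a, i) * B $$ (i, b)) = (Y j * B) $$ (a, b)" if "j \<in> J" for j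
      using B Y[OF that] a b by (simp add: scalar_prod_def lessThan_atLeast0)
    then show ?thesis by simp
  qed
  finally show "(mat_lincomb nr nc J c Y * B) $$ (a, b) = mat_lincomb nr k J c (\<lambda>j. Y j * B) $$ (a, b)"
    using a b by (simp add: index_mat_lincomb)
qed (use B in auto)

lemma mat_lincomb_intertwines_if_permuted:
  assumes A: "A \<in> carrier_mat nr nr" and B: "B \<in> carrier_mat nc nc"
    and Y: "\<And>j. j \<in> J \<Longrightarrow> Y j \<in> carrier_mat nr nc"
    and \<sigma>: "bij_betw \<sigma> J J" and perm: "\<And>j. j \<in> J \<Longrightarrow> A * Y j = Y (\<sigma> j) * B"
  shows "A * mat_lincomb nr nc J (\<lambda>_. 1) Y = mat_lincomb nr nc J (\<lambda>_. 1) Y * B"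
proof -
  have "A * mat_lincomb nr nc J (\<lambda>_. 1) Y = mat_lincomb nr nc J (\<lambda>_. 1) (\<lambda>j. Y (\<sigma> j) * B)"
    by (simp add: mult_mat_lincomb[OF A Y] perm cong: mat_lincomb_cong)
  also have "\<dots> = mat_lincomb nr nc J (\<lambda>_. 1) (\<lambda>j. Y j * B)"
    by (rule mat_lincomb_reindex[OF \<sigma>, of _ _ "\<lambda>_. 1"])
  also have "\<dots> = mat_lincomb nr nc J (\<lambda>_. 1) Y * B"
    by (rule mat_lincomb_mult[OF B Y, symmetric])
  finally show ?thesis .
qed

lemma kron_carrier [simp]:
  "A \<in> carrier_mat a1 a2 \<Longrightarrow> B \<in> carrier_mat b1 b2 \<Longrightarrow> kron A B \<in> carrier_mat (a1 * b1) (a2 * b2)"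
  by (auto simp: kron_def)

lemma mixed_radix_lt_div_mod:
  assumes "i < a" "k < (b::nat)"
  shows "i * b + k < a * b" "(i * b + k) div b = i" "(i * b + k) mod b = k"
proof -
  have "i * b + k < Suc i * b" using assms(2) by simp
  also have "\<dots> \<le> a * b" using assms(1) by (intro mult_le_mono1) simp
  finally show "i * b + k < a * b" .
qed (use assms in simp_all)

lemma index_kron:
  assumes "A \<in> carrier_mat a1 a2" "B \<in> carrier_mat b1 b2" "i < a1" "k < b1" "j < a2" "l < b2"
  shows "kron A B $$ (i * b1 + k, j * b2 + l) = A $$ (i, j) * B $$ (k, l)"
  using assms mixed_radix_lt_div_mod[of i a1 k b1] mixed_radix_lt_div_mod[of j a2 l b2]
  by (simp add: kron_def)

lemma sum_lessThan_mult_split: "(\<Sum>t<a * b. g t) = (\<Sum>i<a. \<Sum>k<b. g (i * b + k :: nat))"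
proof -
  have "sum g {i * b..<i * b + b} = (\<Sum>k<b. g (i * b + k))" for i
    using sum.shift_bounds_nat_ivl[of g 0 "i * b" b] by (simp add: lessThan_atLeast0 add.commute)
  moreover have "(\<Sum>t<a * b. g t) = (\<Sum>i<a. sum g {i * b..<i * b + b})"
    by (simp add: sum.nat_group)
  ultimately show ?thesis by simp
qed

lemma kron_mult:
  assumes A: "A \<in> carrier_mat a1 a2" and B: "B \<in> carrier_mat b1 b2"
    and C: "C \<in> carrier_mat a2 a3" and D: "D \<in> carrier_mat b2 b3"
  shows "kron A B * kron C D = kron (A * C) (B * D)"
proof (rule eq_matI)
  have AC: "A * C \<in> carrier_mat a1 a3" and BD: "B * D \<in> carrier_mat b1 b3" using A B C D by auto
  fix r s assume "r < dim_row (kron (A * C) (B * D))" "s < dim_col (kron (A * C) (B * D))"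
  hence r: "r < a1 * b1" and s: "s < a3 * b3" using kron_carrier[OF AC BD] by auto
  define i k j l where "i = r div b1" "k = r mod b1" "j = s div b3" "l = s mod b3"
  have rs: "r = i * b1 + k" "s = j * b3 + l" unfolding i_k_j_l_def by simp_all
  have "0 < b1" "0 < b3" using r s by (auto intro: gr0I)
  then have ik: "i < a1" "k < b1" and jl: "j < a3" "l < b3"
    using r s unfolding i_k_j_l_def by (auto simp: less_mult_imp_div_less)
  have "(kron A B * kron C D) $$ (r, s) = (\<Sum>t<a2 * b2. kron A B $$ (r, t) * kron C D $$ (t, s))"
    using r s A B C D by (simp add: scalar_prod_def lessThan_atLeast0 kron_def[of C D] kron_def[of A B])
  also have "\<dots> = (\<Sum>p<a2. \<Sum>q<b2. (A $$ (i, p) * C $$ (p, j)) * (B $$ (k, q) * D $$ (q, l)))"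
    unfolding sum_lessThan_mult_split rs
  proof (intro sum.cong refl)
    fix p q assume "p \<in> {..<a2}" "q \<in> {..<b2}"
    then show "kron A B $$ (i * b1 + k, p * b2 + q) * kron C D $$ (p * b2 + q, j * b3 + l) =
      (A $$ (i, p) * C $$ (p, j)) * (B $$ (k, q) * D $$ (q, l))"
      by (simp add: index_kron[OF A B ik] index_kron[OF C D _ _ jl])
  qed
  also have "\<dots> = (A * C) $$ (i, j) * (B * D) $$ (k, l)"
    using A B C D ik jl by (simp add: sum_product scalar_prod_def lessThan_atLeast0)
  finally show "(kron A B * kron C D) $$ (r, s) = kron (A * C) (B * D) $$ (r, s)"
    unfolding rs using ik jl by (simp add: index_kron[OF AC BD])
qed (use A B C D in \<open>auto simp: kron_def\<close>)

section \<open>Representations, submodules and subquotients\<close>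

lemma rep_carrier: "is_rep G n \<rho> \<Longrightarrow> g \<in> carrier G \<Longrightarrow> \<rho> g \<in> carrier_mat n n"
  unfolding is_rep_def by auto

lemma rep_mult:
  "is_rep G n \<rho> \<Longrightarrow> g \<in> carrier G \<Longrightarrow> h \<in> carrier G \<Longrightarrow> \<rho> (g \<otimes>\<^bsub>G\<^esub> h) = \<rho> g * \<rho> h"
  unfolding is_rep_def by auto

lemma rep_inv:
  assumes "group G" "is_rep G n \<rho>" "g \<in> carrier G"
  shows rep_inv_left: "\<rho> (inv\<^bsub>G\<^esub> g) * \<rho> g = 1\<^sub>m n"
    and rep_inv_right: "\<rho> g * \<rho> (inv\<^bsub>G\<^esub> g) = 1\<^sub>m n"
proof -
  interpret group G by fact
  show "\<rho> (inv\<^bsub>G\<^esub> g) * \<rho> g = 1\<^sub>m n" "\<rho> g * \<rho> (inv\<^bsub>G\<^esub> g) = 1\<^sub>m n"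
    using assms(2,3) unfolding is_rep_def by (metis inv_closed l_inv, metis inv_closed r_inv)
qed

lemma rep_conj_scalar:
  assumes "group G" "is_rep G n \<rho>" "g \<in> carrier G"
  shows "\<rho> g * (c \<cdot>\<^sub>m 1\<^sub>m n) * \<rho> (inv\<^bsub>G\<^esub> g) = c \<cdot>\<^sub>m 1\<^sub>m n"
proof -
  have g: "\<rho> g \<in> carrier_mat n n" "\<rho> (inv\<^bsub>G\<^esub> g) \<in> carrier_mat n n"
    using assms by (auto intro: rep_carrier group.inv_closed)
  then have "\<rho> g * (c \<cdot>\<^sub>m 1\<^sub>m n) = c \<cdot>\<^sub>m \<rho> g"
    using mult_smult_distrib[OF g(1) one_carrier_mat] by simp
  then have "\<rho> g * (c \<cdot>\<^sub>m 1\<^sub>m n) * \<rho> (inv\<^bsub>G\<^esub> g) = c \<cdot>\<^sub>m (\<rho> g * \<rho> (inv\<^bsub>G\<^esub> g))"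
    using mult_smult_assoc_mat[OF g] by simp
  then show ?thesis using rep_inv_right[OF assms] by simp
qed

lemma subspace_carrier: "is_subspace n S \<Longrightarrow> v \<in> S \<Longrightarrow> v \<in> carrier_vec n"
  and subspace_zero: "is_subspace n S \<Longrightarrow> 0\<^sub>v n \<in> S"
  and subspace_add: "is_subspace n S \<Longrightarrow> u \<in> S \<Longrightarrow> v \<in> S \<Longrightarrow> u + v \<in> S"
  and subspace_smult: "is_subspace n S \<Longrightarrow> v \<in> S \<Longrightarrow> a \<cdot>\<^sub>v v \<in> S"
  unfolding is_subspace_def by blast+

lemma subspace_diff:
  assumes "is_subspace n S" "u \<in> S" "v \<in> S"
  shows "u - v \<in> S"
proof -
  have "u - v = u + (-1) \<cdot>\<^sub>v v"
    using subspace_carrier[OF assms(1)] assms(2,3) by (intro eq_vecI) auto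
  then show ?thesis using assms by (simp add: subspace_add subspace_smult)
qed

lemma submodule_subspace: "is_submodule H n \<rho> S \<Longrightarrow> is_subspace n S"
  and submodule_closed: "is_submodule H n \<rho> S \<Longrightarrow> g \<in> H \<Longrightarrow> v \<in> S \<Longrightarrow> \<rho> g *\<^sub>v v \<in> S"
  unfolding is_submodule_def by blast+

lemma submodule_Int:
  "is_submodule H n \<rho> A \<Longrightarrow> is_submodule H n \<rho> B \<Longrightarrow> is_submodule H n \<rho> (A \<inter> B)"
  unfolding is_submodule_def is_subspace_def by auto

lemma vec_diff_eq_zero_iff:
  "(u :: 'a :: ab_group_add vec) \<in> carrier_vec n \<Longrightarrow> v \<in> carrier_vec n \<Longrightarrow> u - v = 0\<^sub>v n \<longleftrightarrow> u = v"
proof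
  assume uv: "u \<in> carrier_vec n" "v \<in> carrier_vec n" and "u - v = 0\<^sub>v n"
  then have "(u - v) $ i = 0" if "i < n" for i using that by simp
  then show "u = v" using uv by (intro eq_vecI) auto
qed simp

lemma mat_diff_eq_zero_imp_eq:
  assumes "(A :: 'a :: ab_group_add mat) \<in> carrier_mat nr nc" "B \<in> carrier_mat nr nc"
    and "A - B = 0\<^sub>m nr nc"
  shows "A = B"
proof (rule eq_matI)
  fix i j assume ij: "i < dim_row B" "j < dim_col B"
  have "A $$ (i, j) - B $$ (i, j) = (A - B) $$ (i, j)" using assms(1,2) ij by simp
  also have "\<dots> = 0" using assms(2,3) ij by simp
  finally show "A $$ (i, j) = B $$ (i, j)" by simp
qed (use assms in auto)

lemma vec_diff_add_cancel:
  "(u :: 'a :: ab_group_add vec) \<in> carrier_vec n \<Longrightarrow> v \<in> carrier_vec n \<Longrightarrow> u - v + v = u"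
  by (intro eq_vecI) auto

lemma eigenspace_submodule:
  assumes rep: "is_rep G n \<rho>" and Z: "Z \<in> carrier_mat n n"
    and comm: "\<And>g. g \<in> carrier G \<Longrightarrow> Z * \<rho> g = \<rho> g * Z"
  shows "is_submodule (carrier G) n \<rho> {w \<in> carrier_vec n. Z *\<^sub>v w = k \<cdot>\<^sub>v w}"
  unfolding is_submodule_def is_subspace_def
proof (intro conjI ballI allI)
  fix g w assume g: "g \<in> carrier G" and w: "w \<in> {w \<in> carrier_vec n. Z *\<^sub>v w = k \<cdot>\<^sub>v w}"
  have \<rho>g: "\<rho> g \<in> carrier_mat n n" using rep_carrier[OF rep g] .
  have "Z *\<^sub>v (\<rho> g *\<^sub>v w) = (Z * \<rho> g) *\<^sub>v w"
    using Z \<rho>g w by simp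
  also have "\<dots> = (\<rho> g * Z) *\<^sub>v w"
    by (simp only: comm[OF g])
  also have "\<dots> = k \<cdot>\<^sub>v (\<rho> g *\<^sub>v w)"
    using Z \<rho>g w by (simp add: mult_mat_vec)
  finally show "\<rho> g *\<^sub>v w \<in> {w \<in> carrier_vec n. Z *\<^sub>v w = k \<cdot>\<^sub>v w}"
    using \<rho>g w by simp
next
  fix a w assume "w \<in> {w \<in> carrier_vec n. Z *\<^sub>v w = k \<cdot>\<^sub>v w}"
  then show "a \<cdot>\<^sub>v w \<in> {w \<in> carrier_vec n. Z *\<^sub>v w = k \<cdot>\<^sub>v w}"
    using Z by (simp add: mult_mat_vec smult_smult_assoc mult.commute[of a])
qed (use Z in \<open>auto simp: mult_add_distrib_mat_vec smult_add_distrib_vec\<close>)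

lemma schur_lemma:
  fixes \<rho> :: "'g \<Rightarrow> 'f::alg_closed_field mat"
  assumes irr: "irreducible_rep G n \<rho>" and Z: "Z \<in> carrier_mat n n"
    and comm: "\<And>g. g \<in> carrier G \<Longrightarrow> Z * \<rho> g = \<rho> g * Z"
  shows "\<exists>c. Z = c \<cdot>\<^sub>m 1\<^sub>m n"
proof -
  have rep: "is_rep G n \<rho>" and n: "0 < n"
    and simple: "\<And>S. is_submodule (carrier G) n \<rho> S \<Longrightarrow> S = {0\<^sub>v n} \<or> S = carrier_vec n"
    using irr unfolding irreducible_rep_def by auto
  have "degree (char_poly Z) = n" using degree_monic_char_poly[OF Z] by auto
  then obtain k where "poly (char_poly Z) k = 0" using alg_closed_imp_poly_has_root n by auto
  then have "eigenvalue Z k" using eigenvalue_root_char_poly[OF Z] by auto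
  then obtain v where v: "v \<in> carrier_vec n" "v \<noteq> 0\<^sub>v n" "Z *\<^sub>v v = k \<cdot>\<^sub>v v"
    unfolding eigenvalue_def eigenvector_def using Z by auto
  then have eig: "{w \<in> carrier_vec n. Z *\<^sub>v w = k \<cdot>\<^sub>v w} = carrier_vec n"
    using simple[OF eigenspace_submodule[OF rep Z comm]] by blast
  have "Z = k \<cdot>\<^sub>m 1\<^sub>m n"
  proof (rule eq_matI)
    fix i j assume "i < dim_row (k \<cdot>\<^sub>m 1\<^sub>m n)" "j < dim_col (k \<cdot>\<^sub>m 1\<^sub>m n)"
    then have i: "i < n" and j: "j < n" by auto
    have "unit_vec n j \<in> {w \<in> carrier_vec n. Z *\<^sub>v w = k \<cdot>\<^sub>v w}" unfolding eig by simp
    then have "Z *\<^sub>v unit_vec n j = k \<cdot>\<^sub>v unit_vec n j" by simp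
    then have "(Z *\<^sub>v unit_vec n j) $ i = (k \<cdot>\<^sub>v unit_vec n j) $ i" by simp
    then show "Z $$ (i, j) = (k \<cdot>\<^sub>m 1\<^sub>m n) $$ (i, j)"
      using Z i j by simp
  qed (use Z in auto)
  then show ?thesis by blast
qed

lemma subquot_isoE:
  assumes "subquot_iso G n \<rho> S T m \<sigma>"
  obtains F where "F \<in> carrier_mat m n" "(\<lambda>v. F *\<^sub>v v) ` T = carrier_vec m"
    "{v \<in> T. F *\<^sub>v v = 0\<^sub>v m} = S"
    "\<And>g v. g \<in> carrier G \<Longrightarrow> v \<in> T \<Longrightarrow> F *\<^sub>v (\<rho> g *\<^sub>v v) = \<sigma> g *\<^sub>v (F *\<^sub>v v)"
  using assms unfolding subquot_iso_def by blast

lemma equivariant_image_submodule: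
  assumes F: "F \<in> carrier_mat m n"
    and equiv: "\<And>g v. g \<in> carrier G \<Longrightarrow> v \<in> T \<Longrightarrow> F *\<^sub>v (\<rho> g *\<^sub>v v) = \<sigma> g *\<^sub>v (F *\<^sub>v v)"
    and K: "is_submodule (carrier G) n \<rho> K" and KT: "K \<subseteq> T"
  shows "is_submodule (carrier G) m \<sigma> ((\<lambda>v. F *\<^sub>v v) ` K)"
proof -
  have ss: "is_subspace n K" using submodule_subspace[OF K] .
  note Kc = subspace_carrier[OF ss]
  show ?thesis
    unfolding is_submodule_def is_subspace_def
  proof (intro conjI ballI allI)
    show "(\<lambda>v. F *\<^sub>v v) ` K \<subseteq> carrier_vec m" using F Kc by auto
    show "0\<^sub>v m \<in> (\<lambda>v. F *\<^sub>v v) ` K"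
      using F subspace_zero[OF ss] by (intro image_eqI[of _ _ "0\<^sub>v n"]) auto
  next
    fix u v assume "u \<in> (\<lambda>v. F *\<^sub>v v) ` K" "v \<in> (\<lambda>v. F *\<^sub>v v) ` K"
    then obtain u' v' where "u' \<in> K" "v' \<in> K" "u = F *\<^sub>v u'" "v = F *\<^sub>v v'" by auto
    then show "u + v \<in> (\<lambda>v. F *\<^sub>v v) ` K"
      using F Kc subspace_add[OF ss] by (intro image_eqI[of _ _ "u' + v'"]) (auto simp: mult_add_distrib_mat_vec)
  next
    fix a v assume "v \<in> (\<lambda>v. F *\<^sub>v v) ` K"
    then obtain v' where "v' \<in> K" "v = F *\<^sub>v v'" by auto
    then show "a \<cdot>\<^sub>v v \<in> (\<lambda>v. F *\<^sub>v v) ` K"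
      using F Kc subspace_smult[OF ss] by (intro image_eqI[of _ _ "a \<cdot>\<^sub>v v'"]) (auto simp: mult_mat_vec)
  next
    fix g v assume g: "g \<in> carrier G" and "v \<in> (\<lambda>v. F *\<^sub>v v) ` K"
    then obtain v' where "v' \<in> K" "v = F *\<^sub>v v'" by auto
    then show "\<sigma> g *\<^sub>v v \<in> (\<lambda>v. F *\<^sub>v v) ` K"
      using equiv[OF g] KT submodule_closed[OF K g] by (intro image_eqI[of _ _ "\<rho> g *\<^sub>v v'"]) auto
  qed
qed

lemma submodule_between_irreducible_subquot:
  assumes iso: "subquot_iso G n \<rho> S T m \<sigma>" and irr: "irreducible_rep G m \<sigma>"
    and K: "is_submodule (carrier G) n \<rho> K" and T: "is_submodule (carrier G) n \<rho> T"
    and SK: "S \<subseteq> K" and KT: "K \<subseteq> T"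
  shows "K = S \<or> K = T"
proof -
  obtain F where F: "F \<in> carrier_mat m n" and surj: "(\<lambda>v. F *\<^sub>v v) ` T = carrier_vec m"
    and ker: "{v \<in> T. F *\<^sub>v v = 0\<^sub>v m} = S"
    and equiv: "\<And>g v. g \<in> carrier G \<Longrightarrow> v \<in> T \<Longrightarrow> F *\<^sub>v (\<rho> g *\<^sub>v v) = \<sigma> g *\<^sub>v (F *\<^sub>v v)"
    using subquot_isoE[OF iso] by blast
  have ssK: "is_subspace n K" and ssT: "is_subspace n T"
    using K T by (simp_all add: submodule_subspace)
  have "is_submodule (carrier G) m \<sigma> ((\<lambda>v. F *\<^sub>v v) ` K)"
    using F equiv K KT by (rule equivariant_image_submodule)
  then have "(\<lambda>v. F *\<^sub>v v) ` K = {0\<^sub>v m} \<or> (\<lambda>v. F *\<^sub>v v) ` K = carrier_vec m"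
    using irr unfolding irreducible_rep_def by blast
  then show ?thesis
  proof
    assume "(\<lambda>v. F *\<^sub>v v) ` K = {0\<^sub>v m}"
    then have "K \<subseteq> S" using KT by (auto simp flip: ker)
    then show ?thesis using SK by auto
  next
    assume image: "(\<lambda>v. F *\<^sub>v v) ` K = carrier_vec m"
    have "w \<in> K" if w: "w \<in> T" for w
    proof -
      have wc: "w \<in> carrier_vec n" using subspace_carrier[OF ssT w] .
      have "F *\<^sub>v w \<in> (\<lambda>v. F *\<^sub>v v) ` K" using image F wc by simp
      then obtain k where k: "F *\<^sub>v w = F *\<^sub>v k" "k \<in> K" by (rule imageE)
      have kc: "k \<in> carrier_vec n" using subspace_carrier[OF ssK k(2)] .
      have "w - k \<in> T" using subspace_diff[OF ssT w] k KT by auto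
      moreover have "F *\<^sub>v (w - k) = 0\<^sub>v m"
        using F wc kc k(1) by (simp add: mult_minus_distrib_mat_vec)
      ultimately have "w - k \<in> K" using SK by (auto simp flip: ker)
      then have "(w - k) + k \<in> K" using subspace_add[OF ssK _ k(2)] by blast
      then show "w \<in> K" using vec_diff_add_cancel[OF wc kc] by simp
    qed
    then show ?thesis using KT by auto
  qed
qed

lemma subquot_iso_ex_not_in_kernel:
  fixes \<rho> :: "'g \<Rightarrow> 'f::field mat"
  assumes "subquot_iso G n \<rho> S T m \<sigma>" and "0 < m"
  shows "\<exists>x\<in>T. x \<notin> S"
proof -
  obtain F where surj: "(\<lambda>v. F *\<^sub>v v) ` T = carrier_vec m"
    and ker: "{v \<in> T. F *\<^sub>v v = 0\<^sub>v m} = S"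
    using assms(1) by (rule subquot_isoE)
  have "unit_vec m 0 \<in> (\<lambda>v. F *\<^sub>v v) ` T" unfolding surj by simp
  then obtain x where x: "F *\<^sub>v x = unit_vec m 0" "x \<in> T" by (rule imageE) simp
  have "x \<notin> S"
  proof
    assume "x \<in> S"
    then have "F *\<^sub>v x = 0\<^sub>v m" using ker by blast
    then show False using x(1) assms(2) by simp
  qed
  then show ?thesis using x(2) by blast
qed

lemma dim_eq_1_if_spanned_by:
  assumes v0: "v0 \<in> carrier_vec m" "v0 \<noteq> (0\<^sub>v m :: 'f::field vec)"
    and multiple: "\<And>w. w \<in> carrier_vec m \<Longrightarrow> \<exists>c. w = c \<cdot>\<^sub>v v0"
  shows "m = 1"
proof (rule ccontr)
  assume "m \<noteq> 1"
  moreover have "0 < m" using v0 by (cases m) auto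
  ultimately have "1 < m" by simp
  obtain c where "unit_vec m 0 = c \<cdot>\<^sub>v v0" using multiple[of "unit_vec m 0"] by auto
  then have "unit_vec m 0 $ 0 = (c \<cdot>\<^sub>v v0) $ 0" by simp
  then have "c * v0 $ 0 = 1" using \<open>0 < m\<close> v0 by simp
  obtain d where "unit_vec m 1 = d \<cdot>\<^sub>v v0" using multiple[of "unit_vec m 1"] by auto
  then have "unit_vec m 1 $ 0 = (d \<cdot>\<^sub>v v0) $ 0" "unit_vec m 1 $ 1 = (d \<cdot>\<^sub>v v0) $ 1" by simp_all
  then have "d * v0 $ 0 = 0" and d1: "d * v0 $ 1 = 1" using \<open>1 < m\<close> v0 by simp_all
  moreover have "v0 $ 0 \<noteq> 0" using \<open>c * v0 $ 0 = 1\<close> by auto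
  ultimately have "d = 0" by simp
  then show False using d1 by simp
qed

lemma rep_iso_triv_if_fixed_vector:
  fixes \<sigma> :: "'g \<Rightarrow> 'f::field mat"
  assumes rep: "is_rep G 1 \<sigma>" and v0: "v0 \<in> carrier_vec 1" "v0 \<noteq> 0\<^sub>v 1"
    and fixed: "\<And>g. g \<in> carrier G \<Longrightarrow> \<sigma> g *\<^sub>v v0 = v0"
  shows "rep_iso G 1 \<sigma> 1 triv_rep"
proof -
  have v00: "v0 $ 0 \<noteq> 0" using v0 by (metis eq_vecI carrier_vecD index_zero_vec less_one)
  have \<sigma>1: "\<sigma> g = 1\<^sub>m 1" if g: "g \<in> carrier G" for g
  proof -
    have \<sigma>g: "\<sigma> g \<in> carrier_mat 1 1" using rep_carrier[OF rep g] .
    have "(\<sigma> g *\<^sub>v v0) $ 0 = v0 $ 0" using fixed[OF g] by simp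
    then have "\<sigma> g $$ (0, 0) * v0 $ 0 = v0 $ 0" using \<sigma>g v0 by (simp add: scalar_prod_def)
    then show ?thesis using \<sigma>g v00 by (intro eq_matI) auto
  qed
  show ?thesis
    unfolding rep_iso_def subquot_iso_def
  proof (intro bexI[of _ "1\<^sub>m 1"] conjI ballI)
    show "(\<lambda>v. 1\<^sub>m 1 *\<^sub>v v) ` carrier_vec 1 = (carrier_vec 1 :: 'f vec set)"
      by (auto simp: image_iff intro!: bexI)
    show "{v \<in> carrier_vec 1. 1\<^sub>m 1 *\<^sub>v v = 0\<^sub>v 1} = {0\<^sub>v 1 :: 'f vec}" by auto
    fix g v assume "g \<in> carrier G" and "(v :: 'f vec) \<in> carrier_vec 1"
    then show "1\<^sub>m 1 *\<^sub>v (\<sigma> g *\<^sub>v v) = triv_rep g *\<^sub>v (1\<^sub>m 1 *\<^sub>v v)"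
      using \<sigma>1 by (simp add: triv_rep_def)
  qed simp
qed

lemma rep_iso_triv_if_spanned_by_fixed:
  fixes \<sigma> :: "'g \<Rightarrow> 'f::field mat"
  assumes iso: "subquot_iso G n \<rho> S T m \<sigma>" and rep: "is_rep G m \<sigma>"
    and T: "is_submodule (carrier G) n \<rho> T"
    and x0: "x0 \<in> T" "x0 \<notin> S"
    and span: "\<And>x. x \<in> T \<Longrightarrow> \<exists>c. x - c \<cdot>\<^sub>v x0 \<in> S"
    and fixed: "\<And>g. g \<in> carrier G \<Longrightarrow> \<rho> g *\<^sub>v x0 - x0 \<in> S"
  shows "rep_iso G m \<sigma> 1 triv_rep"
proof -
  obtain Q where Q: "Q \<in> carrier_mat m n" and surj: "(\<lambda>v. Q *\<^sub>v v) ` T = carrier_vec m"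
    and ker: "{v \<in> T. Q *\<^sub>v v = 0\<^sub>v m} = S"
    and equiv: "\<And>g v. g \<in> carrier G \<Longrightarrow> v \<in> T \<Longrightarrow> Q *\<^sub>v (\<rho> g *\<^sub>v v) = \<sigma> g *\<^sub>v (Q *\<^sub>v v)"
    using subquot_isoE[OF iso] by blast
  have ss: "is_subspace n T" using submodule_subspace[OF T] .
  note Tc = subspace_carrier[OF ss]
  have Q_eq: "Q *\<^sub>v x = Q *\<^sub>v y" if "x \<in> T" "y \<in> T" "x - y \<in> S" for x y
  proof -
    have "Q *\<^sub>v (x - y) = 0\<^sub>v m" using that(3) ker by blast
    moreover have "Q *\<^sub>v (x - y) = Q *\<^sub>v x - Q *\<^sub>v y"
      using Q Tc[OF that(1)] Tc[OF that(2)] by (rule mult_minus_distrib_mat_vec)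
    ultimately show ?thesis
      using vec_diff_eq_zero_iff[of "Q *\<^sub>v x" m "Q *\<^sub>v y"] Q Tc that(1,2) by auto
  qed
  have v0: "Q *\<^sub>v x0 \<in> carrier_vec m" "Q *\<^sub>v x0 \<noteq> 0\<^sub>v m" using Q x0 Tc ker by auto
  have multiple: "\<exists>c. w = c \<cdot>\<^sub>v (Q *\<^sub>v x0)" if "w \<in> carrier_vec m" for w
  proof -
    have "w \<in> (\<lambda>v. Q *\<^sub>v v) ` T" using that by (simp only: surj)
    then obtain x where x: "x \<in> T" "w = Q *\<^sub>v x" by (rule imageE) simp
    obtain c where "x - c \<cdot>\<^sub>v x0 \<in> S" using span[OF x(1)] by blast
    then have "w = Q *\<^sub>v (c \<cdot>\<^sub>v x0)" using Q_eq x x0 subspace_smult[OF ss] by blast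
    then show ?thesis using Q Tc x0 by (auto simp: mult_mat_vec)
  qed
  have m: "m = 1" using dim_eq_1_if_spanned_by[OF v0 multiple] .
  show ?thesis unfolding m
  proof (rule rep_iso_triv_if_fixed_vector)
    show "is_rep G 1 \<sigma>" using rep m by simp
    show "Q *\<^sub>v x0 \<in> carrier_vec 1" "Q *\<^sub>v x0 \<noteq> 0\<^sub>v 1" using v0 m by simp_all
    fix g assume g: "g \<in> carrier G"
    show "\<sigma> g *\<^sub>v (Q *\<^sub>v x0) = Q *\<^sub>v x0"
      using Q_eq[OF submodule_closed[OF T g x0(1)] x0(1) fixed[OF g]] equiv[OF g x0(1)] by simp
  qed
qed

lemma subquot_iso_triv_diff_mem:
  assumes iso: "subquot_iso G n \<rho> S T 1 triv_rep" and T: "is_submodule (carrier G) n \<rho> T"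
    and g: "g \<in> carrier G" and v: "v \<in> T"
  shows "\<rho> g *\<^sub>v v - v \<in> S"
proof -
  obtain F where F: "F \<in> carrier_mat 1 n" and ker: "{v \<in> T. F *\<^sub>v v = 0\<^sub>v 1} = S"
    and equiv: "\<And>g v. g \<in> carrier G \<Longrightarrow> v \<in> T \<Longrightarrow> F *\<^sub>v (\<rho> g *\<^sub>v v) = triv_rep g *\<^sub>v (F *\<^sub>v v)"
    using subquot_isoE[OF iso] by blast
  have ss: "is_subspace n T" using submodule_subspace[OF T] .
  have gv: "\<rho> g *\<^sub>v v \<in> T" using submodule_closed[OF T g v] .
  have "F *\<^sub>v (\<rho> g *\<^sub>v v - v) = 0\<^sub>v 1"
    using F equiv[OF g v] subspace_carrier[OF ss] v gv
    by (simp add: mult_minus_distrib_mat_vec triv_rep_def)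
  then show ?thesis using subspace_diff[OF ss gv v] by (auto simp flip: ker)
qed

lemma End_rep_nonscalar_if_dim_End_ge2:
  fixes \<rho> :: "'g \<Rightarrow> 'f::field mat"
  assumes "dim_End_ge2 H m \<rho>"
  shows "\<exists>M \<in> End_rep H m \<rho>. \<forall>c. M \<noteq> c \<cdot>\<^sub>m 1\<^sub>m m"
proof (rule ccontr)
  assume "\<not> ?thesis"
  then have scalar: "\<And>M. M \<in> End_rep H m \<rho> \<Longrightarrow> \<exists>c. M = c \<cdot>\<^sub>m 1\<^sub>m m" by blast
  from assms obtain M1 M2 where M: "M1 \<in> End_rep H m \<rho>" "M2 \<in> End_rep H m \<rho>"
    and indep: "\<And>a b. a \<cdot>\<^sub>m M1 + b \<cdot>\<^sub>m M2 = 0\<^sub>m m m \<Longrightarrow> a = 0 \<and> b = 0"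
    unfolding dim_End_ge2_def by blast
  obtain c1 c2 where c: "M1 = c1 \<cdot>\<^sub>m 1\<^sub>m m" "M2 = c2 \<cdot>\<^sub>m 1\<^sub>m m" using scalar M by blast
  show False
  proof (cases "c1 = 0 \<and> c2 = 0")
    case True
    then have "1 \<cdot>\<^sub>m M1 + 0 \<cdot>\<^sub>m M2 = 0\<^sub>m m m" unfolding c by (intro eq_matI) auto
    then show False using indep by fastforce
  next
    case False
    have "c2 \<cdot>\<^sub>m M1 + (- c1) \<cdot>\<^sub>m M2 = 0\<^sub>m m m" unfolding c by (intro eq_matI) auto
    then show False using indep False by fastforce
  qed
qed

lemma is_triv_plusE:
  assumes "is_triv_plus G n \<rho> a \<alpha>"
  obtains S1 S2 where "is_submodule (carrier G) n \<rho> S1" "is_submodule (carrier G) n \<rho> S2"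
    "{u + v | u v. u \<in> S1 \<and> v \<in> S2} = carrier_vec n"
    "subquot_iso G n \<rho> {0\<^sub>v n} S1 1 triv_rep" "subquot_iso G n \<rho> {0\<^sub>v n} S2 a \<alpha>"
  using assms unfolding is_triv_plus_def by blast

lemma uniserial_1A1E:
  assumes "uniserial_1A1 G n \<rho> a \<alpha>"
  obtains W1 W2 where "uniserial G n \<rho>"
    "is_submodule (carrier G) n \<rho> W1" "is_submodule (carrier G) n \<rho> W2" "W1 \<subseteq> W2"
    "subquot_iso G n \<rho> {0\<^sub>v n} W1 1 triv_rep" "subquot_iso G n \<rho> W1 W2 a \<alpha>"
    "subquot_iso G n \<rho> W2 (carrier_vec n) 1 triv_rep"
  using assms unfolding uniserial_1A1_def by blast

section \<open>The permutation module on the cosets of P\<close>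

definition ones :: "nat \<Rightarrow> 'a::field vec" where "ones n = vec n (\<lambda>_. 1)"

locale coset_perm_module = group G for G :: "'g monoid" (structure) +
  fixes P :: "'g set"
  assumes finite_carrier: "finite (carrier G)" and subgroup_P: "subgroup P G"
begin

abbreviation "n \<equiv> ind_dim G P"
abbreviation "e \<equiv> coset_enum G P"

lemma P_subset: "P \<subseteq> carrier G"
  using subgroup_P by (rule subgroup.subset)

lemma lcosets_of_eq_image: "lcosets_of G P = (\<lambda>x. x <#\<^bsub>G\<^esub> P) ` carrier G"
  unfolding lcosets_of_def by auto

lemma finite_lcosets: "finite (lcosets_of G P)"
  unfolding lcosets_of_eq_image using finite_carrier by simp

lemma coset_enum_bij: "bij_betw e {..<n} (lcosets_of G P)"
proof -
  have "\<exists>h. bij_betw h {..<n} (lcosets_of G P)"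
    using ex_bij_betw_nat_finite[OF finite_lcosets] unfolding ind_dim_def lessThan_atLeast0 .
  then show ?thesis unfolding coset_enum_def by (rule someI_ex)
qed

lemma ind_dim_pos: "0 < n"
proof -
  have "P \<in> lcosets_of G P"
    unfolding lcosets_of_eq_image using lcos_mult_one[OF P_subset] by (metis image_eqI one_closed)
  then show ?thesis unfolding ind_dim_def using finite_lcosets card_gt_0_iff by blast
qed

lemma coset_enum_mem: "j < n \<Longrightarrow> e j \<in> lcosets_of G P"
  using coset_enum_bij bij_betwE by blast

lemma coset_enum_inj: "i < n \<Longrightarrow> j < n \<Longrightarrow> e i = e j \<Longrightarrow> i = j"
  using coset_enum_bij unfolding bij_betw_def inj_on_def by auto

definition coset_rep :: "nat \<Rightarrow> 'g" where
  "coset_rep j = (SOME x. x \<in> carrier G \<and> e j = x <#\<^bsub>G\<^esub> P)"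

lemma coset_rep: assumes "j < n" shows "coset_rep j \<in> carrier G" "e j = coset_rep j <#\<^bsub>G\<^esub> P"
proof -
  have "\<exists>x. x \<in> carrier G \<and> e j = x <#\<^bsub>G\<^esub> P"
    using coset_enum_mem[OF assms] unfolding lcosets_of_eq_image by auto
  from someI_ex[OF this] show "coset_rep j \<in> carrier G" "e j = coset_rep j <#\<^bsub>G\<^esub> P"
    unfolding coset_rep_def by auto
qed

definition act :: "'g \<Rightarrow> nat \<Rightarrow> nat" where
  "act g j = the_inv_into {..<n} e (g <#\<^bsub>G\<^esub> e j)"

lemma lcoset_mult_mem_lcosets:
  assumes "g \<in> carrier G" "C \<in> lcosets_of G P"
  shows "g <#\<^bsub>G\<^esub> C \<in> lcosets_of G P"
proof -
  from assms(2) obtain x where x: "x \<in> carrier G" "C = x <#\<^bsub>G\<^esub> P"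
    unfolding lcosets_of_eq_image by auto
  then have "g <#\<^bsub>G\<^esub> C = (g \<otimes> x) <#\<^bsub>G\<^esub> P" using assms(1) lcos_m_assoc[OF P_subset] by simp
  then show ?thesis unfolding lcosets_of_eq_image using x assms(1) by auto
qed

lemma act: assumes "g \<in> carrier G" "j < n" shows "act g j < n" "e (act g j) = g <#\<^bsub>G\<^esub> e j"
proof -
  have C: "g <#\<^bsub>G\<^esub> e j \<in> lcosets_of G P"
    using lcoset_mult_mem_lcosets[OF assms(1) coset_enum_mem[OF assms(2)]] .
  show "act g j < n" unfolding act_def using coset_enum_bij C
    by (metis bij_betw_def lessThan_iff subset_refl the_inv_into_into)
  show "e (act g j) = g <#\<^bsub>G\<^esub> e j" unfolding act_def using coset_enum_bij C
    by (metis bij_betw_def f_the_inv_into_f)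
qed

lemma act_eq_iff:
  assumes "g \<in> carrier G" "i < n" "j < n"
  shows "act g j = i \<longleftrightarrow> g <#\<^bsub>G\<^esub> e j = e i"
  using act[OF assms(1,3)] coset_enum_inj assms by metis

lemma act_inv: assumes "g \<in> carrier G" "j < n"
  shows "act (inv g) (act g j) = j" "act g (act (inv g) j) = j"
proof -
  have "inv g <#\<^bsub>G\<^esub> (g <#\<^bsub>G\<^esub> e j) = e j" "g <#\<^bsub>G\<^esub> (inv g <#\<^bsub>G\<^esub> e j) = e j"
    using assms coset_rep[OF assms(2)] lcos_m_assoc[OF P_subset] by (simp_all add: m_assoc[symmetric])
  then show "act (inv g) (act g j) = j" "act g (act (inv g) j) = j"
    using assms act act_eq_iff by auto
qed

lemma act_inv_eq_iff:
  assumes "g \<in> carrier G" "i < n" "j < n"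
  shows "act (inv g) i = j \<longleftrightarrow> act g j = i"
  using act_inv[OF assms(1)] assms by metis

lemma act_bij: "g \<in> carrier G \<Longrightarrow> bij_betw (act g) {..<n} {..<n}"
  by (rule bij_betw_byWitness[of _ "act (inv g)"]) (use act_inv act in auto)

lemma act_transitive: assumes "i < n" "j < n" shows "\<exists>g\<in>carrier G. act g j = i"
proof -
  define g where "g = coset_rep i \<otimes> inv (coset_rep j)"
  have g: "g \<in> carrier G" unfolding g_def using coset_rep assms by auto
  have "g <#\<^bsub>G\<^esub> e j = e i"
    unfolding g_def using coset_rep[OF assms(1)] coset_rep[OF assms(2)] lcos_m_assoc[OF P_subset]
    by (simp add: m_assoc)
  then show ?thesis using act_eq_iff g assms by blast
qed

lemma coset_rep_act:
  assumes "g \<in> carrier G" "j < n"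
  shows "(g \<otimes> coset_rep j) <#\<^bsub>G\<^esub> P = coset_rep (act g j) <#\<^bsub>G\<^esub> P"
  using act[OF assms] coset_rep[OF assms(2)] coset_rep[OF act(1)[OF assms]] assms
    lcos_m_assoc[OF P_subset] by simp

lemma ind_triv_rep_carrier: "ind_triv_rep G P g \<in> carrier_mat n n"
  by (simp add: ind_triv_rep_def)

lemma ind_triv_rep_mult_vec:
  assumes g: "g \<in> carrier G" and v: "v \<in> carrier_vec n"
  shows "ind_triv_rep G P g *\<^sub>v v = vec n (\<lambda>i. v $ act (inv g) i)"
proof (rule eq_vecI)
  fix i assume "i < dim_vec (vec n (\<lambda>i. v $ act (inv g) i))"
  then have i: "i < n" by simp
  have "(ind_triv_rep G P g *\<^sub>v v) $ i = (\<Sum>j\<in>{0..<n}. (if act g j = i then 1 else 0) * v $ j)"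
    using g v i by (auto simp: ind_triv_rep_def scalar_prod_def act_eq_iff intro!: sum.cong)
  also have "\<dots> = (\<Sum>j\<in>{0..<n}. if j = act (inv g) i then v $ j else 0)"
  proof (rule sum.cong[OF refl])
    fix j assume "j \<in> {0..<n}"
    then have "act g j = i \<longleftrightarrow> j = act (inv g) i" using act_inv_eq_iff[OF g i, of j] by auto
    then show "(if act g j = i then 1 else 0) * v $ j = (if j = act (inv g) i then v $ j else 0)" by simp
  qed
  also have "\<dots> = v $ act (inv g) i" using act[of "inv g" i] g i by simp
  finally show "(ind_triv_rep G P g *\<^sub>v v) $ i = vec n (\<lambda>i. v $ act (inv g) i) $ i" using i by simp
qed (simp add: ind_triv_rep_def)

lemma ind_triv_rep_unit_vec:
  assumes g: "g \<in> carrier G" and j: "j < n"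
  shows "ind_triv_rep G P g *\<^sub>v unit_vec n j = unit_vec n (act g j)"
proof (rule eq_vecI)
  fix i assume "i < dim_vec (unit_vec n (act g j))"
  then have i: "i < n" by simp
  have "act (inv g) i = j \<longleftrightarrow> i = act g j" using act_inv_eq_iff[OF g i j] by auto
  then show "(ind_triv_rep G P g *\<^sub>v unit_vec n j) $ i = unit_vec n (act g j) $ i"
    using i j act[OF g j] act[of "inv g" i] g by (simp add: ind_triv_rep_mult_vec[OF g])
qed (simp add: ind_triv_rep_def)

definition coset_conj :: "('g \<Rightarrow> 'f::field mat) \<Rightarrow> 'f mat \<Rightarrow> nat \<Rightarrow> 'f mat" where
  "coset_conj \<rho> M j = \<rho> (coset_rep j) * M * \<rho> (inv (coset_rep j))"

lemma conj_End_rep_lcoset_invariant: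
  assumes rep: "is_rep G m \<rho>" and M: "M \<in> End_rep P m \<rho>"
    and x: "x \<in> carrier G" and y: "y \<in> carrier G" and eq: "x <#\<^bsub>G\<^esub> P = y <#\<^bsub>G\<^esub> P"
  shows "\<rho> x * M * \<rho> (inv x) = \<rho> y * M * \<rho> (inv y)"
proof -
  have Mc: "M \<in> carrier_mat m m" and Mcomm: "\<And>h. h \<in> P \<Longrightarrow> M * \<rho> h = \<rho> h * M"
    using M unfolding End_rep_def by auto
  have "y \<in> x <#\<^bsub>G\<^esub> P"
    using eq y subgroup.one_closed[OF subgroup_P] unfolding l_coset_def by force
  then obtain p where p: "p \<in> P" and yp: "y = x \<otimes> p" unfolding l_coset_def by auto
  have pc: "p \<in> carrier G" using p P_subset by auto
  note c = rep_carrier[OF rep]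
  have "\<rho> y * M * \<rho> (inv y) = \<rho> x * ((\<rho> p * M) * \<rho> (inv p)) * \<rho> (inv x)"
    using c x pc Mc yp rep_mult[OF rep]
    by (simp add: inv_mult_group assoc_mult_mat[of _ m m _ m _ m] mult_carrier_mat[of _ m m _ m])
  also have "\<rho> p * M = M * \<rho> p" using Mcomm[OF p] by simp
  also have "M * \<rho> p * \<rho> (inv p) = M"
    using c pc Mc rep_inv_right[OF is_group rep pc]
    by (simp add: assoc_mult_mat[of _ m m _ m _ m] mult_carrier_mat[of _ m m _ m])
  finally show ?thesis by simp
qed

lemma coset_conj_carrier:
  "is_rep G m \<rho> \<Longrightarrow> M \<in> carrier_mat m m \<Longrightarrow> j < n \<Longrightarrow> coset_conj \<rho> M j \<in> carrier_mat m m"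
  unfolding coset_conj_def using coset_rep rep_carrier by (metis inv_closed mult_carrier_mat)

lemma coset_conj_act:
  assumes rep: "is_rep G m \<rho>" and M: "M \<in> End_rep P m \<rho>" and g: "g \<in> carrier G" and j: "j < n"
  shows "\<rho> g * coset_conj \<rho> M j * \<rho> (inv g) = coset_conj \<rho> M (act g j)"
proof -
  have Mc: "M \<in> carrier_mat m m" using M unfolding End_rep_def by auto
  note c = rep_carrier[OF rep]
  have r: "coset_rep j \<in> carrier G" "coset_rep (act g j) \<in> carrier G"
    using coset_rep act g j by auto
  have "\<rho> g * coset_conj \<rho> M j * \<rho> (inv g) =
      \<rho> (g \<otimes> coset_rep j) * M * \<rho> (inv (g \<otimes> coset_rep j))"
    unfolding coset_conj_def using c g r Mc rep_mult[OF rep]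
    by (simp add: inv_mult_group assoc_mult_mat[of _ m m _ m _ m] mult_carrier_mat[of _ m m _ m])
  also have "\<dots> = coset_conj \<rho> M (act g j)"
    unfolding coset_conj_def
    by (rule conj_End_rep_lcoset_invariant[OF rep M]) (use g r coset_rep_act[OF g j] in auto)
  finally show ?thesis .
qed

lemma coset_conj_intertwines:
  assumes rep: "is_rep G m \<rho>" and M: "M \<in> End_rep P m \<rho>" and g: "g \<in> carrier G" and j: "j < n"
  shows "\<rho> g * coset_conj \<rho> M j = coset_conj \<rho> M (act g j) * \<rho> g"
proof -
  have Mc: "M \<in> carrier_mat m m" using M unfolding End_rep_def by auto
  have cj: "coset_conj \<rho> M j \<in> carrier_mat m m" using coset_conj_carrier[OF rep Mc j] .
  have "coset_conj \<rho> M (act g j) * \<rho> g = \<rho> g * coset_conj \<rho> M j * \<rho> (inv g) * \<rho> g"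
    using coset_conj_act[OF assms] by simp
  also have "\<dots> = \<rho> g * coset_conj \<rho> M j"
    using rep_carrier[OF rep] g cj rep_inv_left[OF is_group rep g]
    by (simp add: assoc_mult_mat[of _ m m _ m _ m] mult_carrier_mat[of _ m m _ m])
  finally show ?thesis by simp
qed

lemma coset_conj_scalar_imp_scalar:
  assumes rep: "is_rep G m \<rho>" and M: "M \<in> carrier_mat m m" and j: "j < n"
    and eq: "coset_conj \<rho> M j = c \<cdot>\<^sub>m 1\<^sub>m m"
  shows "M = c \<cdot>\<^sub>m 1\<^sub>m m"
proof -
  define r where "r = coset_rep j"
  have r: "r \<in> carrier G" "inv r \<in> carrier G" unfolding r_def using coset_rep j by auto
  have c: "\<rho> r \<in> carrier_mat m m" "\<rho> (inv r) \<in> carrier_mat m m" using rep_carrier[OF rep] r by auto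
  have "M = \<rho> (inv r) * \<rho> r * M * (\<rho> (inv r) * \<rho> r)"
    using M by (simp add: rep_inv_left[OF is_group rep r(1)])
  also have "\<dots> = \<rho> (inv r) * coset_conj \<rho> M j * \<rho> (inv (inv r))"
    using M c r unfolding coset_conj_def r_def[symmetric]
    by (simp add: assoc_mult_mat[of _ m m _ m _ m] mult_carrier_mat[of _ m m _ m])
  also have "\<dots> = c \<cdot>\<^sub>m 1\<^sub>m m" unfolding eq by (rule rep_conj_scalar[OF is_group rep r(2)])
  finally show ?thesis .
qed

lemma coset_conj_const_imp_scalar:
  fixes \<rho> :: "'g \<Rightarrow> 'f::alg_closed_field mat"
  assumes irr: "irreducible_rep G m \<rho>" and M: "M \<in> End_rep P m \<rho>"
    and const: "\<And>k. k < n \<Longrightarrow> coset_conj \<rho> M k = coset_conj \<rho> M 0"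
  shows "\<exists>c. M = c \<cdot>\<^sub>m 1\<^sub>m m"
proof -
  have rep: "is_rep G m \<rho>" using irr unfolding irreducible_rep_def by auto
  have Mc: "M \<in> carrier_mat m m" using M unfolding End_rep_def by auto
  have "\<exists>c. coset_conj \<rho> M 0 = c \<cdot>\<^sub>m 1\<^sub>m m"
  proof (rule schur_lemma[OF irr coset_conj_carrier[OF rep Mc ind_dim_pos]])
    fix g assume g: "g \<in> carrier G"
    show "coset_conj \<rho> M 0 * \<rho> g = \<rho> g * coset_conj \<rho> M 0"
      using coset_conj_intertwines[OF rep M g ind_dim_pos, unfolded const[OF act(1)[OF g ind_dim_pos]]]
      by simp
  qed
  then show ?thesis using coset_conj_scalar_imp_scalar[OF rep Mc ind_dim_pos] by blast
qed

lemma triv_submodule_const: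
  assumes sub: "is_submodule (carrier G) n (ind_triv_rep G P) S"
    and iso: "subquot_iso G n (ind_triv_rep G P) {0\<^sub>v n} S 1 triv_rep"
    and v: "v \<in> S" and i: "i < n" and j: "j < n"
  shows "v $ i = v $ j"
proof -
  obtain g where g: "g \<in> carrier G" "act g j = i" using act_transitive[OF i j] by blast
  have vc: "v \<in> carrier_vec n" using subspace_carrier[OF submodule_subspace[OF sub] v] .
  have "ind_triv_rep G P g *\<^sub>v v = v"
    using subquot_iso_triv_diff_mem[OF iso sub g(1) v] vec_diff_eq_zero_iff
      mult_mat_vec_carrier[OF ind_triv_rep_carrier vc] vc by blast
  then show ?thesis
    using ind_triv_rep_mult_vec[OF g(1) vc] i act_inv(1)[OF g(1) j] g(2) by (metis index_vec)
qed

lemma triv_submodule_eq_smult_ones: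
  assumes sub: "is_submodule (carrier G) n (ind_triv_rep G P) S"
    and iso: "subquot_iso G n (ind_triv_rep G P) {0\<^sub>v n} S 1 triv_rep" and v: "v \<in> S"
  shows "v = (v $ 0) \<cdot>\<^sub>v ones n"
proof (rule eq_vecI)
  fix i assume "i < dim_vec ((v $ 0) \<cdot>\<^sub>v ones n)"
  then have i: "i < n" by (simp add: ones_def)
  show "v $ i = ((v $ 0) \<cdot>\<^sub>v ones n) $ i"
    using triv_submodule_const[OF sub iso v i ind_dim_pos] i by (simp add: ones_def)
qed (use subspace_carrier[OF submodule_subspace[OF sub] v] in \<open>simp add: ones_def\<close>)

lemma ones_mem_triv_submodule:
  assumes sub: "is_submodule (carrier G) n (ind_triv_rep G P) S"
    and iso: "subquot_iso G n (ind_triv_rep G P) {0\<^sub>v n} S 1 triv_rep"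
  shows "ones n \<in> S"
proof -
  obtain w where w: "w \<in> S" "w \<noteq> 0\<^sub>v n" using subquot_iso_ex_not_in_kernel[OF iso] by auto
  have wc: "w \<in> carrier_vec n" using subspace_carrier[OF submodule_subspace[OF sub] w(1)] .
  have w_const: "w $ i = w $ 0" if "i < n" for i
    by (rule triv_submodule_const[OF sub iso w(1) that ind_dim_pos])
  have w0: "w $ 0 \<noteq> 0"
  proof
    assume "w $ 0 = 0"
    then have "w $ i = 0\<^sub>v n $ i" if "i < n" for i using w_const[OF that] that by simp
    then show False using w(2) wc by (metis carrier_vecD eq_vecI index_zero_vec(2))
  qed
  have "ones n = (1 / w $ 0) \<cdot>\<^sub>v w"
  proof (rule eq_vecI)
    fix i assume "i < dim_vec ((1 / w $ 0) \<cdot>\<^sub>v w)"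
    then have i: "i < n" using wc by simp
    show "ones n $ i = ((1 / w $ 0) \<cdot>\<^sub>v w) $ i" using w_const[OF i] w0 wc i by (simp add: ones_def)
  qed (use wc in \<open>simp add: ones_def\<close>)
  then show ?thesis using subspace_smult[OF submodule_subspace[OF sub] w(1)] by simp
qed

lemma unit_vec_diff_mem_triv_quotient:
  assumes iso: "subquot_iso G n (ind_triv_rep G P) T (carrier_vec n) 1 triv_rep"
    and k: "k < n" and l: "l < n"
  shows "unit_vec n k - unit_vec n l \<in> T"
proof -
  obtain g where g: "g \<in> carrier G" "act g l = k" using act_transitive[OF k l] by blast
  have "is_submodule (carrier G) n (ind_triv_rep G P) (carrier_vec n)"
    using ind_triv_rep_carrier by (auto simp: is_submodule_def is_subspace_def intro: mult_mat_vec_carrier)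
  then have "ind_triv_rep G P g *\<^sub>v unit_vec n l - unit_vec n l \<in> T"
    by (rule subquot_iso_triv_diff_mem[OF iso _ g(1)]) simp
  then show ?thesis unfolding ind_triv_rep_unit_vec[OF g(1) l] g(2) .
qed

end

section \<open>Tensor products of irreducible modules with large End_P\<close>

text \<open>The situation of the theorem with U \<otimes> V assumed irreducible, which is shown to be
  contradictory. Mk and Nk are the conjugates of the non-scalar P-endomorphisms M and N to the cosets.\<close>

locale irreducible_tensor = coset_perm_module G P for G :: "'g monoid" (structure) and P +
  fixes \<rho>U \<rho>V :: "'g \<Rightarrow> 'f::alg_closed_field mat" and nU nV :: nat and M N :: "'f mat"
  assumes irrU: "irreducible_rep G nU \<rho>U" and irrV: "irreducible_rep G nV \<rho>V"
    and irr_tensor: "irreducible_rep G (nU * nV) (tensor_rep \<rho>U \<rho>V)"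
    and M: "M \<in> End_rep P nU \<rho>U" and N: "N \<in> End_rep P nV \<rho>V"
    and M_nonscalar: "\<And>c. M \<noteq> c \<cdot>\<^sub>m 1\<^sub>m nU" and N_nonscalar: "\<And>c. N \<noteq> c \<cdot>\<^sub>m 1\<^sub>m nV"
begin

lemma repU: "is_rep G nU \<rho>U" and repV: "is_rep G nV \<rho>V"
  using irrU irrV unfolding irreducible_rep_def by auto

abbreviation "Mk \<equiv> coset_conj \<rho>U M"
abbreviation "Nk \<equiv> coset_conj \<rho>V N"

lemma Mk_carrier: "k < n \<Longrightarrow> Mk k \<in> carrier_mat nU nU"
  and Nk_carrier: "k < n \<Longrightarrow> Nk k \<in> carrier_mat nV nV"
  using coset_conj_carrier[OF repU] coset_conj_carrier[OF repV] M N unfolding End_rep_def by auto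

definition tensor_sum :: "'f mat" where
  "tensor_sum = mat_lincomb (nU * nV) (nU * nV) {..<n} (\<lambda>_. 1) (\<lambda>k. kron (Mk k) (Nk k))"

text \<open>G permutes the summands of the tensor sum as it permutes the cosets.\<close>
lemma tensor_sum_scalar: "\<exists>c. tensor_sum = c \<cdot>\<^sub>m 1\<^sub>m (nU * nV)"
proof (rule schur_lemma[OF irr_tensor])
  show "tensor_sum \<in> carrier_mat (nU * nV) (nU * nV)" by (simp add: tensor_sum_def)
  fix g assume g: "g \<in> carrier G"
  have U: "\<rho>U g \<in> carrier_mat nU nU" and V: "\<rho>V g \<in> carrier_mat nV nV"
    using rep_carrier[OF repU g] rep_carrier[OF repV g] .
  have "tensor_rep \<rho>U \<rho>V g * kron (Mk k) (Nk k) = kron (Mk (act g k)) (Nk (act g k)) * tensor_rep \<rho>U \<rho>V g"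
    if k: "k \<in> {..<n}" for k
    using k act[OF g] kron_mult[OF U V Mk_carrier Nk_carrier] kron_mult[OF Mk_carrier Nk_carrier U V]
      coset_conj_intertwines[OF repU M g] coset_conj_intertwines[OF repV N g]
    by (simp add: tensor_rep_def)
  then show "tensor_sum * tensor_rep \<rho>U \<rho>V g = tensor_rep \<rho>U \<rho>V g * tensor_sum"
    unfolding tensor_sum_def using U V Mk_carrier Nk_carrier act_bij[OF g]
    by (intro mat_lincomb_intertwines_if_permuted[symmetric]) (auto simp: tensor_rep_def)
qed

definition conj_comb :: "'f vec \<Rightarrow> 'f mat" where
  "conj_comb f = mat_lincomb nU nU {..<n} (\<lambda>k. f $ k) Mk"

lemma conj_comb_carrier [simp]: "conj_comb f \<in> carrier_mat nU nU"
  by (simp add: conj_comb_def)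

lemma conj_comb_add:
  "u \<in> carrier_vec n \<Longrightarrow> v \<in> carrier_vec n \<Longrightarrow> conj_comb (u + v) = conj_comb u + conj_comb v"
  unfolding conj_comb_def mat_lincomb_add[symmetric] by (rule mat_lincomb_cong) auto

lemma conj_comb_diff:
  "u \<in> carrier_vec n \<Longrightarrow> v \<in> carrier_vec n \<Longrightarrow> conj_comb (u - v) = conj_comb u - conj_comb v"
  unfolding conj_comb_def mat_lincomb_diff[symmetric] by (rule mat_lincomb_cong) auto

lemma conj_comb_smult: "v \<in> carrier_vec n \<Longrightarrow> conj_comb (a \<cdot>\<^sub>v v) = a \<cdot>\<^sub>m conj_comb v"
  unfolding conj_comb_def mat_lincomb_smult[symmetric] by (rule mat_lincomb_cong) auto

lemma conj_comb_zero: "conj_comb (0\<^sub>v n) = 0\<^sub>m nU nU"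
  by (rule eq_matI) (auto simp: conj_comb_def index_mat_lincomb intro!: sum.neutral)

lemma conj_comb_unit_vec:
  assumes j: "j < n"
  shows "conj_comb (unit_vec n j) = Mk j"
proof -
  have "conj_comb (unit_vec n j) = mat_lincomb nU nU {..<n} (\<lambda>k. if k = j then 1 else 0) Mk"
    unfolding conj_comb_def using j by (intro mat_lincomb_cong) auto
  also have "\<dots> = Mk j" using j Mk_carrier by (intro mat_lincomb_single) auto
  finally show ?thesis .
qed

lemma conj_comb_ind_triv_rep:
  assumes g: "g \<in> carrier G" and f: "f \<in> carrier_vec n"
  shows "conj_comb (ind_triv_rep G P g *\<^sub>v f) = \<rho>U g * conj_comb f * \<rho>U (inv g)"
proof -
  have U: "\<rho>U g \<in> carrier_mat nU nU" "\<rho>U (inv g) \<in> carrier_mat nU nU"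
    using rep_carrier[OF repU] g by auto
  have "conj_comb (ind_triv_rep G P g *\<^sub>v f) = mat_lincomb nU nU {..<n} (\<lambda>k. f $ act (inv g) k) Mk"
    unfolding conj_comb_def ind_triv_rep_mult_vec[OF g f] by (rule mat_lincomb_cong) auto
  also have "\<dots> = mat_lincomb nU nU {..<n} (\<lambda>k. f $ act (inv g) (act g k)) (\<lambda>k. Mk (act g k))"
    using mat_lincomb_reindex[OF act_bij[OF g], of nU nU "\<lambda>k. f $ act (inv g) k" Mk] by simp
  also have "\<dots> = mat_lincomb nU nU {..<n} (\<lambda>k. f $ k) (\<lambda>k. \<rho>U g * Mk k * \<rho>U (inv g))"
    by (rule mat_lincomb_cong) (use act_inv(1)[OF g] coset_conj_act[OF repU M g] in auto)
  also have "\<dots> = \<rho>U g * conj_comb f * \<rho>U (inv g)"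
  proof -
    have "\<rho>U g * conj_comb f = mat_lincomb nU nU {..<n} (\<lambda>k. f $ k) (\<lambda>k. \<rho>U g * Mk k)"
      unfolding conj_comb_def by (rule mult_mat_lincomb[OF U(1)]) (use Mk_carrier in auto)
    also have "\<dots> * \<rho>U (inv g) = mat_lincomb nU nU {..<n} (\<lambda>k. f $ k) (\<lambda>k. \<rho>U g * Mk k * \<rho>U (inv g))"
      by (rule mat_lincomb_mult[OF U(2)]) (use Mk_carrier U in auto)
    finally show ?thesis by simp
  qed
  finally show ?thesis .
qed

definition scalar_coeffs :: "'f vec set" where
  "scalar_coeffs = {f \<in> carrier_vec n. \<exists>c. conj_comb f = c \<cdot>\<^sub>m 1\<^sub>m nU}"

lemma conj_comb_ind_triv_rep_scalar_coeffs:
  "f \<in> scalar_coeffs \<Longrightarrow> g \<in> carrier G \<Longrightarrow> conj_comb (ind_triv_rep G P g *\<^sub>v f) = conj_comb f"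
  unfolding scalar_coeffs_def using conj_comb_ind_triv_rep rep_conj_scalar[OF is_group repU] by auto

lemma scalar_coeffs_submodule: "is_submodule (carrier G) n (ind_triv_rep G P) scalar_coeffs"
  unfolding is_submodule_def is_subspace_def
proof (intro conjI ballI allI)
  have "conj_comb (0\<^sub>v n) = 0 \<cdot>\<^sub>m 1\<^sub>m nU" unfolding conj_comb_zero by (intro eq_matI) auto
  then show "0\<^sub>v n \<in> scalar_coeffs" unfolding scalar_coeffs_def by auto
next
  fix u v assume "u \<in> scalar_coeffs" "v \<in> scalar_coeffs"
  then obtain a b where "conj_comb u = a \<cdot>\<^sub>m 1\<^sub>m nU" "conj_comb v = b \<cdot>\<^sub>m 1\<^sub>m nU"
    and uv: "u \<in> carrier_vec n" "v \<in> carrier_vec n" unfolding scalar_coeffs_def by auto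
  then have "conj_comb (u + v) = (a + b) \<cdot>\<^sub>m 1\<^sub>m nU"
    by (simp add: conj_comb_add add_smult_distrib_right_mat[of "1\<^sub>m nU" nU nU])
  then show "u + v \<in> scalar_coeffs" unfolding scalar_coeffs_def using uv by auto
next
  fix a v assume "v \<in> scalar_coeffs"
  then obtain b where "conj_comb v = b \<cdot>\<^sub>m 1\<^sub>m nU" and v: "v \<in> carrier_vec n"
    unfolding scalar_coeffs_def by auto
  moreover have "a \<cdot>\<^sub>m (b \<cdot>\<^sub>m 1\<^sub>m nU) = (a * b) \<cdot>\<^sub>m 1\<^sub>m nU" by (intro eq_matI) auto
  ultimately have "conj_comb (a \<cdot>\<^sub>v v) = (a * b) \<cdot>\<^sub>m 1\<^sub>m nU" by (simp add: conj_comb_smult)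
  then show "a \<cdot>\<^sub>v v \<in> scalar_coeffs" unfolding scalar_coeffs_def using v by auto
next
  fix g v assume "g \<in> carrier G" "v \<in> scalar_coeffs"
  then show "ind_triv_rep G P g *\<^sub>v v \<in> scalar_coeffs"
    using conj_comb_ind_triv_rep_scalar_coeffs ind_triv_rep_carrier
    unfolding scalar_coeffs_def by (auto intro: mult_mat_vec_carrier)
qed (auto simp: scalar_coeffs_def)

lemma ones_mem_scalar_coeffs: "ones n \<in> scalar_coeffs"
proof -
  have "conj_comb (ones n) = mat_lincomb nU nU {..<n} (\<lambda>_. 1) Mk"
    unfolding conj_comb_def by (rule mat_lincomb_cong) (auto simp: ones_def)
  moreover have "\<exists>c. mat_lincomb nU nU {..<n} (\<lambda>_. 1) Mk = c \<cdot>\<^sub>m 1\<^sub>m nU"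
  proof (rule schur_lemma[OF irrU])
    fix g assume g: "g \<in> carrier G"
    show "mat_lincomb nU nU {..<n} (\<lambda>_. 1) Mk * \<rho>U g = \<rho>U g * mat_lincomb nU nU {..<n} (\<lambda>_. 1) Mk"
      using rep_carrier[OF repU g] Mk_carrier act_bij[OF g] coset_conj_intertwines[OF repU M g]
      by (intro mat_lincomb_intertwines_if_permuted[symmetric]) auto
  qed simp
  ultimately show ?thesis unfolding scalar_coeffs_def by (auto simp: ones_def)
qed

lemma unit_vec_not_mem_scalar_coeffs: "unit_vec n 0 \<notin> scalar_coeffs"
proof
  assume "unit_vec n 0 \<in> scalar_coeffs"
  then obtain c where "Mk 0 = c \<cdot>\<^sub>m 1\<^sub>m nU"
    unfolding scalar_coeffs_def using conj_comb_unit_vec[OF ind_dim_pos] by auto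
  then have "M = c \<cdot>\<^sub>m 1\<^sub>m nU"
    using coset_conj_scalar_imp_scalar[OF repU _ ind_dim_pos] M unfolding End_rep_def by blast
  then show False using M_nonscalar by blast
qed

text \<open>The (x nV + a, y nV + b)-entry of the scalar tensor sum is the (x, y)-entry of this
  combination.\<close>
lemma Nk_entries_mem_scalar_coeffs:
  assumes a: "a < nV" and b: "b < nV"
  shows "vec n (\<lambda>k. Nk k $$ (a, b)) \<in> scalar_coeffs"
proof -
  obtain c where c: "tensor_sum = c \<cdot>\<^sub>m 1\<^sub>m (nU * nV)" using tensor_sum_scalar by blast
  have "conj_comb (vec n (\<lambda>k. Nk k $$ (a, b))) = (if a = b then c else 0) \<cdot>\<^sub>m 1\<^sub>m nU"
  proof (rule eq_matI)
    fix x y assume "x < dim_row ((if a = b then c else 0) \<cdot>\<^sub>m 1\<^sub>m nU)"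
      "y < dim_col ((if a = b then c else 0) \<cdot>\<^sub>m 1\<^sub>m nU)"
    then have x: "x < nU" and y: "y < nU" by auto
    note r = mixed_radix_lt_div_mod[OF x a] and s = mixed_radix_lt_div_mod[OF y b]
    have "conj_comb (vec n (\<lambda>k. Nk k $$ (a, b))) $$ (x, y) = (\<Sum>k<n. Mk k $$ (x, y) * Nk k $$ (a, b))"
      unfolding conj_comb_def using x y by (simp add: index_mat_lincomb mult.commute)
    also have "\<dots> = tensor_sum $$ (x * nV + a, y * nV + b)"
      unfolding tensor_sum_def using r s
      by (simp add: index_mat_lincomb index_kron[OF Mk_carrier Nk_carrier x a y b])
    also have "\<dots> = ((if a = b then c else 0) \<cdot>\<^sub>m 1\<^sub>m nU) $$ (x, y)"
    proof -
      have "x * nV + a = y * nV + b \<longleftrightarrow> x = y \<and> a = b" using r s by metis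
      then show ?thesis unfolding c using r s x y by auto
    qed
    finally show "conj_comb (vec n (\<lambda>k. Nk k $$ (a, b))) $$ (x, y) =
      ((if a = b then c else 0) \<cdot>\<^sub>m 1\<^sub>m nU) $$ (x, y)" .
  qed (simp_all add: conj_comb_def)
  then show ?thesis unfolding scalar_coeffs_def by auto
qed

lemma scalar_coeffs_nonconst: "\<exists>f\<in>scalar_coeffs. \<exists>i<n. f $ i \<noteq> f $ 0"
proof -
  have "\<exists>k<n. Nk k \<noteq> Nk 0"
    using coset_conj_const_imp_scalar[OF irrV N] N_nonscalar by blast
  then obtain k where k: "k < n" "Nk k \<noteq> Nk 0" by blast
  have "\<exists>a<nV. \<exists>b<nV. Nk k $$ (a, b) \<noteq> Nk 0 $$ (a, b)"
  proof (rule ccontr)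
    assume "\<not> ?thesis"
    then have "Nk k = Nk 0"
      using Nk_carrier[OF k(1)] Nk_carrier[OF ind_dim_pos] by (intro eq_matI) auto
    with k(2) show False ..
  qed
  then obtain a b where ab: "a < nV" "b < nV" and ne: "Nk k $$ (a, b) \<noteq> Nk 0 $$ (a, b)" by blast
  then have "vec n (\<lambda>k. Nk k $$ (a, b)) $ k \<noteq> vec n (\<lambda>k. Nk k $$ (a, b)) $ 0"
    using k(1) ind_dim_pos by simp
  then show ?thesis using Nk_entries_mem_scalar_coeffs[OF ab] k(1) by blast
qed

lemma scalar_coeffs_cancel:
  assumes x: "x \<in> scalar_coeffs" and y: "y \<in> scalar_coeffs" and y0: "conj_comb y \<noteq> 0\<^sub>m nU nU"
  shows "\<exists>c. conj_comb (x - c \<cdot>\<^sub>v y) = 0\<^sub>m nU nU"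
proof -
  obtain a b where a: "conj_comb x = a \<cdot>\<^sub>m 1\<^sub>m nU" and b: "conj_comb y = b \<cdot>\<^sub>m 1\<^sub>m nU"
    and xy: "x \<in> carrier_vec n" "y \<in> carrier_vec n"
    using x y unfolding scalar_coeffs_def by auto
  have "b \<noteq> 0" using y0 b by (auto intro: eq_matI)
  then have "conj_comb (x - (a / b) \<cdot>\<^sub>v y) = 0\<^sub>m nU nU"
    using xy by (simp add: conj_comb_diff conj_comb_smult a b) (intro eq_matI; auto)
  then show ?thesis ..
qed

lemma direct_sum_absurd:
  fixes \<alpha> :: "'g \<Rightarrow> 'f mat"
  assumes triv_plus: "is_triv_plus G n (ind_triv_rep G P) a \<alpha>" and irr: "irreducible_rep G a \<alpha>"
  shows False
proof -
  obtain S1 S2 where S1: "is_submodule (carrier G) n (ind_triv_rep G P) S1"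
    and S2: "is_submodule (carrier G) n (ind_triv_rep G P) S2"
    and sum: "{u + v | u v. u \<in> S1 \<and> v \<in> S2} = carrier_vec n"
    and iso1: "subquot_iso G n (ind_triv_rep G P) {0\<^sub>v n} S1 1 triv_rep"
    and iso2: "subquot_iso G n (ind_triv_rep G P) {0\<^sub>v n} S2 a \<alpha>"
    using triv_plus by (rule is_triv_plusE)
  note K = scalar_coeffs_submodule
  have ssK: "is_subspace n scalar_coeffs" using submodule_subspace[OF K] .
  have S1K: "S1 \<subseteq> scalar_coeffs"
  proof
    fix u assume "u \<in> S1"
    then have u_eq: "u = (u $ 0) \<cdot>\<^sub>v ones n" by (rule triv_submodule_eq_smult_ones[OF S1 iso1])
    show "u \<in> scalar_coeffs" by (subst u_eq) (rule subspace_smult[OF ssK ones_mem_scalar_coeffs])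
  qed
  have "scalar_coeffs \<inter> S2 = {0\<^sub>v n} \<or> scalar_coeffs \<inter> S2 = S2"
    using subspace_zero[OF ssK] subspace_zero[OF submodule_subspace[OF S2]]
    by (intro submodule_between_irreducible_subquot[OF iso2 irr submodule_Int[OF K S2] S2]) auto
  then show False
  proof
    assume K_S2: "scalar_coeffs \<inter> S2 = {0\<^sub>v n}"
    obtain f i where f: "f \<in> scalar_coeffs" and i: "i < n" and fi: "f $ i \<noteq> f $ 0"
      using scalar_coeffs_nonconst by blast
    obtain u v where uv: "f = u + v" "u \<in> S1" "v \<in> S2"
      using sum subspace_carrier[OF ssK f] by blast
    have uc: "u \<in> carrier_vec n" and vc: "v \<in> carrier_vec n"
      using uv subspace_carrier submodule_subspace S1 S2 by blast+
    have "v = f - u" using uv(1) uc vc by (intro eq_vecI) auto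
    then have "v \<in> scalar_coeffs" using subspace_diff[OF ssK f] S1K uv(2) by auto
    then have "v = 0\<^sub>v n" using K_S2 uv(3) by blast
    then have "f = u" using uv(1) uc by simp
    then show False using triv_submodule_const[OF S1 iso1 uv(2) i ind_dim_pos] fi by simp
  next
    assume "scalar_coeffs \<inter> S2 = S2"
    then have "carrier_vec n \<subseteq> scalar_coeffs"
      using S1K subspace_add[OF ssK] unfolding sum[symmetric] by blast
    then show False using unit_vec_not_mem_scalar_coeffs unit_vec_carrier by blast
  qed
qed

lemma vanishing_coeffs_submodule:
  assumes T: "is_submodule (carrier G) n (ind_triv_rep G P) T" and TK: "T \<subseteq> scalar_coeffs"
  shows "is_submodule (carrier G) n (ind_triv_rep G P) {x \<in> T. conj_comb x = 0\<^sub>m nU nU}"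
proof -
  have ss: "is_subspace n T" using submodule_subspace[OF T] .
  note Tc = subspace_carrier[OF ss]
  show ?thesis
    unfolding is_submodule_def is_subspace_def
  proof (intro conjI ballI allI)
    show "0\<^sub>v n \<in> {x \<in> T. conj_comb x = 0\<^sub>m nU nU}"
      using subspace_zero[OF ss] conj_comb_zero by simp
  next
    fix u v assume "u \<in> {x \<in> T. conj_comb x = 0\<^sub>m nU nU}" "v \<in> {x \<in> T. conj_comb x = 0\<^sub>m nU nU}"
    then show "u + v \<in> {x \<in> T. conj_comb x = 0\<^sub>m nU nU}"
      using subspace_add[OF ss] Tc by (simp add: conj_comb_add)
  next
    fix a v assume "v \<in> {x \<in> T. conj_comb x = 0\<^sub>m nU nU}"
    then show "a \<cdot>\<^sub>v v \<in> {x \<in> T. conj_comb x = 0\<^sub>m nU nU}"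
      using subspace_smult[OF ss] Tc by (simp add: conj_comb_smult)
  next
    fix g v assume "g \<in> carrier G" "v \<in> {x \<in> T. conj_comb x = 0\<^sub>m nU nU}"
    then show "ind_triv_rep G P g *\<^sub>v v \<in> {x \<in> T. conj_comb x = 0\<^sub>m nU nU}"
      using submodule_closed[OF T] conj_comb_ind_triv_rep_scalar_coeffs TK by auto
  qed (use Tc in auto)
qed

lemma radical_subset_scalar_coeffs:
  fixes \<alpha> :: "'g \<Rightarrow> 'f mat"
  assumes chain: "uniserial G n (ind_triv_rep G P :: 'g \<Rightarrow> 'f mat)"
    and W1: "is_submodule (carrier G) n (ind_triv_rep G P) W1"
    and W2: "is_submodule (carrier G) n (ind_triv_rep G P) W2"
    and iso1: "subquot_iso G n (ind_triv_rep G P) {0\<^sub>v n} W1 1 triv_rep"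
    and iso2: "subquot_iso G n (ind_triv_rep G P) W1 W2 a \<alpha>" and irr: "irreducible_rep G a \<alpha>"
  shows "W2 \<subseteq> scalar_coeffs"
proof -
  note K = scalar_coeffs_submodule
  obtain f i where "f \<in> scalar_coeffs" "i < n" "f $ i \<noteq> f $ 0"
    using scalar_coeffs_nonconst by blast
  then have "\<not> scalar_coeffs \<subseteq> W1" using triv_submodule_const[OF W1 iso1 _ _ ind_dim_pos] by blast
  moreover have "W1 \<subseteq> scalar_coeffs \<or> scalar_coeffs \<subseteq> W1" "W2 \<subseteq> scalar_coeffs \<or> scalar_coeffs \<subseteq> W2"
    using chain K W1 W2 unfolding uniserial_def by blast+
  ultimately show ?thesis using submodule_between_irreducible_subquot[OF iso2 irr K W2] by blast
qed

lemma rep_iso_triv_if_vanishing_coeffs_eq: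
  fixes \<alpha> :: "'g \<Rightarrow> 'f mat"
  assumes iso: "subquot_iso G n (ind_triv_rep G P) S T a \<alpha>" and rep: "is_rep G a \<alpha>"
    and T: "is_submodule (carrier G) n (ind_triv_rep G P) T" and TK: "T \<subseteq> scalar_coeffs"
    and vanishing: "{x \<in> T. conj_comb x = 0\<^sub>m nU nU} = S"
    and x0: "x0 \<in> T" "x0 \<notin> S"
  shows "rep_iso G a \<alpha> 1 triv_rep"
proof -
  have ss: "is_subspace n T" using submodule_subspace[OF T] .
  show ?thesis
  proof (rule rep_iso_triv_if_spanned_by_fixed[OF iso rep T x0])
    have "conj_comb x0 \<noteq> 0\<^sub>m nU nU" using x0 vanishing by blast
    fix x assume x: "x \<in> T"
    then obtain c where "conj_comb (x - c \<cdot>\<^sub>v x0) = 0\<^sub>m nU nU"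
      using scalar_coeffs_cancel \<open>conj_comb x0 \<noteq> 0\<^sub>m nU nU\<close> x0(1) TK by blast
    moreover have "x - c \<cdot>\<^sub>v x0 \<in> T" using subspace_diff[OF ss x subspace_smult[OF ss x0(1)]] .
    ultimately show "\<exists>c. x - c \<cdot>\<^sub>v x0 \<in> S" using vanishing by blast
  next
    fix g assume g: "g \<in> carrier G"
    have x0c: "x0 \<in> carrier_vec n" using subspace_carrier[OF ss x0(1)] .
    have "ind_triv_rep G P g *\<^sub>v x0 - x0 \<in> T"
      using subspace_diff[OF ss submodule_closed[OF T g x0(1)] x0(1)] .
    moreover have "conj_comb (ind_triv_rep G P g *\<^sub>v x0 - x0) = 0\<^sub>m nU nU"
      using conj_comb_diff[OF mult_mat_vec_carrier[OF ind_triv_rep_carrier x0c] x0c]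
        conj_comb_ind_triv_rep_scalar_coeffs[OF _ g] TK x0(1) by auto
    ultimately show "ind_triv_rep G P g *\<^sub>v x0 - x0 \<in> S" using vanishing by blast
  qed
qed

text \<open>The differences of unit vectors lie in the kernel of W \<rightarrow> 1_G and are mapped to Mk k - Mk 0.\<close>
lemma vanishing_coeffs_on_triv_quotient_kernel_absurd:
  assumes iso: "subquot_iso G n (ind_triv_rep G P) T (carrier_vec n) 1 triv_rep"
    and vanishing: "\<And>x. x \<in> T \<Longrightarrow> conj_comb x = 0\<^sub>m nU nU"
  shows False
proof -
  have "Mk k = Mk 0" if k: "k < n" for k
  proof -
    have "conj_comb (unit_vec n k - unit_vec n 0) = 0\<^sub>m nU nU"
      using vanishing unit_vec_diff_mem_triv_quotient[OF iso k ind_dim_pos] by blast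
    then have "Mk k - Mk 0 = 0\<^sub>m nU nU" using conj_comb_diff conj_comb_unit_vec k ind_dim_pos by simp
    then show ?thesis using mat_diff_eq_zero_imp_eq Mk_carrier k ind_dim_pos by blast
  qed
  then show False using coset_conj_const_imp_scalar[OF irrU M] M_nonscalar by blast
qed

text \<open>W1 is spanned by the ones vector; if that is not in the vanishing part Z of T, then T = W1 + Z.\<close>
lemma subset_triv_submodule_if_vanishing_subset:
  assumes W1: "is_submodule (carrier G) n (ind_triv_rep G P) W1"
    and iso1: "subquot_iso G n (ind_triv_rep G P) {0\<^sub>v n} W1 1 triv_rep"
    and T: "is_subspace n T" and W1T: "W1 \<subseteq> T" and TK: "T \<subseteq> scalar_coeffs"
    and sub: "{x \<in> T. conj_comb x = 0\<^sub>m nU nU} \<subseteq> W1"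
    and not_sup: "\<not> W1 \<subseteq> {x \<in> T. conj_comb x = 0\<^sub>m nU nU}"
  shows "T \<subseteq> W1"
proof
  have ss1: "is_subspace n W1" using submodule_subspace[OF W1] .
  have ones_W1: "ones n \<in> W1" using ones_mem_triv_submodule[OF W1 iso1] .
  have "conj_comb (ones n) \<noteq> 0\<^sub>m nU nU"
  proof
    assume "conj_comb (ones n) = 0\<^sub>m nU nU"
    then have smult_ones: "c \<cdot>\<^sub>v ones n \<in> {x \<in> T. conj_comb x = 0\<^sub>m nU nU}" for c
      using subspace_smult[OF T, of "ones n"] ones_W1 W1T by (auto simp: conj_comb_smult ones_def)
    have "W1 \<subseteq> {x \<in> T. conj_comb x = 0\<^sub>m nU nU}"
    proof
      fix u assume "u \<in> W1"
      show "u \<in> {x \<in> T. conj_comb x = 0\<^sub>m nU nU}"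
        by (subst triv_submodule_eq_smult_ones[OF W1 iso1 \<open>u \<in> W1\<close>]) (rule smult_ones)
    qed
    then show False using not_sup by contradiction
  qed
  fix x assume x: "x \<in> T"
  then obtain c where "conj_comb (x - c \<cdot>\<^sub>v ones n) = 0\<^sub>m nU nU"
    using scalar_coeffs_cancel TK ones_mem_scalar_coeffs \<open>conj_comb (ones n) \<noteq> 0\<^sub>m nU nU\<close> by blast
  moreover have "x - c \<cdot>\<^sub>v ones n \<in> T" using subspace_diff[OF T x subspace_smult[OF T]] ones_W1 W1T by blast
  ultimately have "x - c \<cdot>\<^sub>v ones n + c \<cdot>\<^sub>v ones n \<in> W1"
    using sub subspace_add[OF ss1 _ subspace_smult[OF ss1 ones_W1]] by blast
  then show "x \<in> W1" using vec_diff_add_cancel[OF subspace_carrier[OF T x]] by (simp add: ones_def)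
qed

lemma uniserial_absurd:
  fixes \<alpha> :: "'g \<Rightarrow> 'f mat"
  assumes uniserial: "uniserial_1A1 G n (ind_triv_rep G P) a \<alpha>" and irr: "irreducible_rep G a \<alpha>"
    and not_triv: "\<not> rep_iso G a \<alpha> 1 triv_rep"
  shows False
proof -
  obtain W1 W2 where chain: "uniserial G n (ind_triv_rep G P :: 'g \<Rightarrow> 'f mat)"
    and W1: "is_submodule (carrier G) n (ind_triv_rep G P) W1"
    and W2: "is_submodule (carrier G) n (ind_triv_rep G P) W2" and W12: "W1 \<subseteq> W2"
    and iso1: "subquot_iso G n (ind_triv_rep G P) {0\<^sub>v n} W1 1 triv_rep"
    and iso2: "subquot_iso G n (ind_triv_rep G P) W1 W2 a \<alpha>"
    and iso3: "subquot_iso G n (ind_triv_rep G P) W2 (carrier_vec n) 1 triv_rep"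
    using uniserial by (rule uniserial_1A1E)
  have W2K: "W2 \<subseteq> scalar_coeffs" using radical_subset_scalar_coeffs[OF chain W1 W2 iso1 iso2 irr] .
  define Z where "Z = {x \<in> W2. conj_comb x = 0\<^sub>m nU nU}"
  have Z: "is_submodule (carrier G) n (ind_triv_rep G P) Z"
    unfolding Z_def using vanishing_coeffs_submodule[OF W2 W2K] .
  obtain x0 where x0: "x0 \<in> W2" "x0 \<notin> W1"
    using subquot_iso_ex_not_in_kernel[OF iso2] irr unfolding irreducible_rep_def by blast
  have "W1 \<subseteq> Z \<or> Z \<subseteq> W1" using chain Z W1 unfolding uniserial_def by blast
  moreover have "Z \<subseteq> W2" unfolding Z_def by blast
  ultimately consider "Z = W1" | "Z = W2" | "Z \<subseteq> W1" "\<not> W1 \<subseteq> Z"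
    using submodule_between_irreducible_subquot[OF iso2 irr Z W2] by blast
  then show False
  proof cases
    case 1
    then have "rep_iso G a \<alpha> 1 triv_rep"
      using rep_iso_triv_if_vanishing_coeffs_eq[OF iso2 _ W2 W2K _ x0] irr
      unfolding Z_def irreducible_rep_def by blast
    then show False using not_triv by blast
  next
    case 2
    then show False
      using vanishing_coeffs_on_triv_quotient_kernel_absurd[OF iso3] unfolding Z_def by blast
  next
    case 3
    then have "W2 \<subseteq> W1"
      using subset_triv_submodule_if_vanishing_subset[OF W1 iso1 submodule_subspace[OF W2] W12 W2K]
      unfolding Z_def by blast
    then show False using x0 by blast
  qed
qed

end

theorem lemma8p5:
  fixes G :: "'g monoid" and P :: "'g set"
    and \<rho>U \<rho>V :: "'g \<Rightarrow> 'f::alg_closed_field mat" and nU nV :: nat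
  assumes "group G" and "finite (carrier G)"
    and "subgroup P G" and "P \<noteq> carrier G"
    and "irreducible_rep G nU \<rho>U" and "irreducible_rep G nV \<rho>V"
    and "dim_End_ge2 P nU \<rho>U" and "dim_End_ge2 P nV \<rho>V"
    and "\<exists>a (\<alpha> :: 'g \<Rightarrow> 'f mat). irreducible_rep G a \<alpha> \<and> \<not> rep_iso G a \<alpha> 1 triv_rep \<and>
           (is_triv_plus G (ind_dim G P) (ind_triv_rep G P) a \<alpha> \<or>
            uniserial_1A1 G (ind_dim G P) (ind_triv_rep G P) a \<alpha>)"
  shows "\<not> irreducible_rep G (nU * nV) (tensor_rep \<rho>U \<rho>V)"
proof
  assume irr_tensor: "irreducible_rep G (nU * nV) (tensor_rep \<rho>U \<rho>V)"
  obtain M where "M \<in> End_rep P nU \<rho>U" "\<forall>c. M \<noteq> c \<cdot>\<^sub>m 1\<^sub>m nU"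
    using End_rep_nonscalar_if_dim_End_ge2[OF assms(7)] by blast
  moreover obtain N where "N \<in> End_rep P nV \<rho>V" "\<forall>c. N \<noteq> c \<cdot>\<^sub>m 1\<^sub>m nV"
    using End_rep_nonscalar_if_dim_End_ge2[OF assms(8)] by blast
  ultimately interpret irreducible_tensor G P \<rho>U \<rho>V nU nV M N
    using assms(1-3,5,6) irr_tensor
    by (intro irreducible_tensor.intro coset_perm_module.intro coset_perm_module_axioms.intro
        irreducible_tensor_axioms.intro) auto
  show False
    using assms(9) direct_sum_absurd uniserial_absurd by blast
qed

end
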